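(* Let $\epsilon>0$, $\beta\ge 0$, let $M\ge 4$ be an even integer and $N\ge 3$ an integer, and let $\mathcal A$ be the upwind Shishkin-mesh matrix described in the context. Let $x=\mathcal A^{-1}b$ and consider the multiplicative Schwarz method $x^{(k+1)}=T_{ij}x^{(k)}+v$, $k=0,1,2,\dots$, with $(i,j)\in\{(1,2),(2,1)\}$, $v=(I-T_{ij})x$, arbitrary $x^{(0)}$, and errors $e^{(k)}=x-x^{(k)}$ (with $e^{(0)}\ne 0$). Then \[ \frac{\|e^{(k+1)}\|_\infty}{\|e^{(0)}\|_\infty}\le \rho^{k}\,\|T_{ij}\|_\infty,\qquad k=0,1,2,\dots, \] where \[ \rho=\frac{\epsilon}{\epsilon+H_y},\qquad \|T_{12}\|_\infty\le\rho,\qquad \|T_{21}\|_\infty\le 1. \]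
   Context: Setting: let $\tau_y=\min\{1/2,\,2\epsilon\ln M\}$, $H_x=1/N$, $H_y=2(1-\tau_y)/M$, $h_y=2\tau_y/M$, and $m=M/2-1$. Define the scalars $d_H=-\frac{\epsilon}{H_y^2}-\frac1{H_y}$, $d=-\frac{2\epsilon}{H_y(H_y+h_y)}-\frac1{H_y}$, $d_h=-\frac{\epsilon}{h_y^2}-\frac1{h_y}$, $e_H=-\frac{\epsilon}{H_y^2}$, $e=-\frac{2\epsilon}{h_y(H_y+h_y)}$, $e_h=-\frac{\epsilon}{h_y^2}$, and $a_H=\frac{2\epsilon}{H_x^2}+\frac{2\epsilon}{H_y^2}+\frac1{H_y}+\beta$, $a=\frac{2\epsilon}{H_x^2}+\frac{2\epsilon}{H_yh_y}+\frac1{H_y}+\beta$, $a_h=\frac{2\epsilon}{H_x^2}+\frac{2\epsilon}{h_y^2}+\frac1{h_y}+\beta$. With $I$ the identity of size $N-1$, let $C_H=d_HI$, $C=dI$, $C_h=d_hI$, $B_H=e_HI$, $B=eI$, $B_h=e_hI$, and let $A_H,A,A_h$ be the $(N-1)\times(N-1)$ tridiagonal Toeplitz matrices with off-diagonal entries $-\epsilon/H_x^2$ and diagonal entries $a_H,a,a_h$. Let $\hat A_H$ (resp. $\hat A_h$) be the $m\times m$ block tridiagonal matrix with diagonal blocks $A_H$ (resp. $A_h$), subdiagonal blocks $C_H$ (resp. $C_h$) and superdiagonal blocks $B_H$ (resp. $B_h$), and $\mathcal A=\begin{bmatrix}\hat A_H & e_m\otimes B_H & 0\\ e_m^{T}\otimes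 C & A & e_1^{T}\otimes B\\ 0 & e_1\otimes C_h & \hat A_h\end{bmatrix}$, with $e_1,e_m$ the first and last canonical basis vectors of $\mathbb R^m$ and $\otimes$ the Kronecker product. (This is the upwind finite difference discretization of $-\epsilon\Delta u+u_y+\beta u=f$ on $(0,1)^2$ with Dirichlet boundary conditions on the Shishkin mesh with nodes $(iH_x,y_j)$, $y_j=jH_y$ for $j\le M/2$ and $y_j=1-(M-j)h_y$ for $j>M/2$, in lexicographic line ordering.) Let $n=N-1$, $A_1=\begin{bmatrix}\hat A_H & e_m\otimes B_H\\ e_m^{T}\otimes C & A\end{bmatrix}$, $A_2=\begin{bmatrix} A & e_1^{T}\otimes B\\ e_1\otimes C_h & \hat A_h\end{bmatrix}$, $R_1=[I_{n(m+1)}\;\,0]$, $R_2=[0\;\,I_{n(m+1)}]$, $P_i=R_i^{T}A_i^{-1}R_i\mathcal A$, $Q_i=I-P_i$, and the multiplicative Schwarz iteration matrices $T_{12}=Q_2Q_1$, $T_{21}=Q_1Q_2$. *)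

theory Defs
  imports "Jordan_Normal_Form.Gauss_Jordan_Elimination"
begin

definition tau_y :: "real \<Rightarrow> nat \<Rightarrow> real" where
  "tau_y eps M = min (1/2) (2 * eps * ln (real M))"

definition Hx :: "nat \<Rightarrow> real" where "Hx N = 1 / real N"
definition Hy :: "real \<Rightarrow> nat \<Rightarrow> real" where "Hy eps M = 2 * (1 - tau_y eps M) / real M"
definition hy :: "real \<Rightarrow> nat \<Rightarrow> real" where "hy eps M = 2 * tau_y eps M / real M"

definition nn :: "nat \<Rightarrow> nat" where "nn N = N - 1"
definition mm :: "nat \<Rightarrow> nat" where "mm M = M div 2 - 1"

definition dH :: "real \<Rightarrow> nat \<Rightarrow> real" where
  "dH eps M = - eps / (Hy eps M)^2 - 1 / Hy eps M"
definition dd :: "real \<Rightarrow> nat \<Rightarrow> real" where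
  "dd eps M = - 2 * eps / (Hy eps M * (Hy eps M + hy eps M)) - 1 / Hy eps M"
definition dh :: "real \<Rightarrow> nat \<Rightarrow> real" where
  "dh eps M = - eps / (hy eps M)^2 - 1 / hy eps M"
definition eH :: "real \<Rightarrow> nat \<Rightarrow> real" where
  "eH eps M = - eps / (Hy eps M)^2"
definition ee :: "real \<Rightarrow> nat \<Rightarrow> real" where
  "ee eps M = - 2 * eps / (hy eps M * (Hy eps M + hy eps M))"
definition eh :: "real \<Rightarrow> nat \<Rightarrow> real" where
  "eh eps M = - eps / (hy eps M)^2"
definition aH :: "real \<Rightarrow> real \<Rightarrow> nat \<Rightarrow> nat \<Rightarrow> real" where
  "aH eps beta M N = 2 * eps / (Hx N)^2 + 2 * eps / (Hy eps M)^2 + 1 / Hy eps M + beta"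
definition aa :: "real \<Rightarrow> real \<Rightarrow> nat \<Rightarrow> nat \<Rightarrow> real" where
  "aa eps beta M N = 2 * eps / (Hx N)^2 + 2 * eps / (Hy eps M * hy eps M) + 1 / Hy eps M + beta"
definition ah :: "real \<Rightarrow> real \<Rightarrow> nat \<Rightarrow> nat \<Rightarrow> real" where
  "ah eps beta M N = 2 * eps / (Hx N)^2 + 2 * eps / (hy eps M)^2 + 1 / hy eps M + beta"

definition tridiag_toeplitz :: "nat \<Rightarrow> real \<Rightarrow> real \<Rightarrow> real mat" where
  "tridiag_toeplitz n a c = mat n n (\<lambda>(i,j). if i = j then a else if i = j + 1 \<or> j = i + 1 then c else 0)"

definition blk_tridiag :: "nat \<Rightarrow> nat \<Rightarrow> (nat \<Rightarrow> real mat) \<Rightarrow> (nat \<Rightarrow> real mat) \<Rightarrow> (nat \<Rightarrow> real mat) \<Rightarrow> real mat" where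
  "blk_tridiag n K D L U = mat (n * K) (n * K) (\<lambda>(p,q).
     let r = p div n; s = q div n; i = p mod n; l = q mod n in
     if r = s then D r $$ (i,l)
     else if r = s + 1 then L r $$ (i,l)
     else if s = r + 1 then U r $$ (i,l) else 0)"

definition matAH where "matAH eps beta M N = tridiag_toeplitz (nn N) (aH eps beta M N) (- eps / (Hx N)^2)"
definition matA  where "matA eps beta M N = tridiag_toeplitz (nn N) (aa eps beta M N) (- eps / (Hx N)^2)"
definition matAh where "matAh eps beta M N = tridiag_toeplitz (nn N) (ah eps beta M N) (- eps / (Hx N)^2)"
definition matCH where "matCH eps M N = dH eps M \<cdot>\<^sub>m 1\<^sub>m (nn N)"
definition matC  where "matC eps M N = dd eps M \<cdot>\<^sub>m 1\<^sub>m (nn N)"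
definition matCh where "matCh eps M N = dh eps M \<cdot>\<^sub>m 1\<^sub>m (nn N)"
definition matBH where "matBH eps M N = eH eps M \<cdot>\<^sub>m 1\<^sub>m (nn N)"
definition matB  where "matB eps M N = ee eps M \<cdot>\<^sub>m 1\<^sub>m (nn N)"
definition matBh where "matBh eps M N = eh eps M \<cdot>\<^sub>m 1\<^sub>m (nn N)"

text \<open>Global matrix calA (block rows 0..m-1: [C_H A_H B_H], row m: [C A B],
  rows m+1..2m: [C_h A_h B_h]); size n(2m+1) = (N-1)(M-1).\<close>
definition calA :: "real \<Rightarrow> real \<Rightarrow> nat \<Rightarrow> nat \<Rightarrow> real mat" where
  "calA eps beta M N = blk_tridiag (nn N) (2 * mm M + 1)
     (\<lambda>r. if r < mm M then matAH eps beta M N else if r = mm M then matA eps beta M N else matAh eps beta M N)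
     (\<lambda>r. if r < mm M then matCH eps M N else if r = mm M then matC eps M N else matCh eps M N)
     (\<lambda>r. if r < mm M then matBH eps M N else if r = mm M then matB eps M N else matBh eps M N)"

text \<open>A_1 = [[hat A_H, e_m (x) B_H],[e_m^T (x) C, A]].\<close>
definition matA1 :: "real \<Rightarrow> real \<Rightarrow> nat \<Rightarrow> nat \<Rightarrow> real mat" where
  "matA1 eps beta M N = blk_tridiag (nn N) (mm M + 1)
     (\<lambda>r. if r < mm M then matAH eps beta M N else matA eps beta M N)
     (\<lambda>r. if r < mm M then matCH eps M N else matC eps M N)
     (\<lambda>r. matBH eps M N)"

text \<open>A_2 = [[A, e_1^T (x) B],[e_1 (x) C_h, hat A_h]].\<close>
definition matA2 :: "real \<Rightarrow> real \<Rightarrow> nat \<Rightarrow> nat \<Rightarrow> real mat" where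
  "matA2 eps beta M N = blk_tridiag (nn N) (mm M + 1)
     (\<lambda>r. if r = 0 then matA eps beta M N else matAh eps beta M N)
     (\<lambda>r. matCh eps M N)
     (\<lambda>r. if r = 0 then matB eps M N else matBh eps M N)"

definition sz :: "nat \<Rightarrow> nat \<Rightarrow> nat" where "sz M N = nn N * (2 * mm M + 1)"
definition sub_sz :: "nat \<Rightarrow> nat \<Rightarrow> nat" where "sub_sz M N = nn N * (mm M + 1)"

definition matR1 :: "nat \<Rightarrow> nat \<Rightarrow> real mat" where
  "matR1 M N = mat (sub_sz M N) (sz M N) (\<lambda>(i,j). if j = i then 1 else 0)"
definition matR2 :: "nat \<Rightarrow> nat \<Rightarrow> real mat" where
  "matR2 M N = mat (sub_sz M N) (sz M N) (\<lambda>(i,j). if j = i + nn N * mm M then 1 else 0)"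

definition minv :: "real mat \<Rightarrow> real mat" where "minv A = the (mat_inverse A)"

definition matP :: "real mat \<Rightarrow> real mat \<Rightarrow> real mat \<Rightarrow> real mat" where
  "matP R Ai calA' = transpose_mat R * minv Ai * R * calA'"

definition matQ1 where
  "matQ1 eps beta M N = 1\<^sub>m (sz M N) - matP (matR1 M N) (matA1 eps beta M N) (calA eps beta M N)"
definition matQ2 where
  "matQ2 eps beta M N = 1\<^sub>m (sz M N) - matP (matR2 M N) (matA2 eps beta M N) (calA eps beta M N)"

definition T12 :: "real \<Rightarrow> real \<Rightarrow> nat \<Rightarrow> nat \<Rightarrow> real mat" where
  "T12 eps beta M N = matQ2 eps beta M N * matQ1 eps beta M N"
definition T21 :: "real \<Rightarrow> real \<Rightarrow> nat \<Rightarrow> nat \<Rightarrow> real mat" where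
  "T21 eps beta M N = matQ1 eps beta M N * matQ2 eps beta M N"

definition vec_inf_norm :: "real vec \<Rightarrow> real" where
  "vec_inf_norm v = Max (insert 0 ((\<lambda>i. \<bar>v $ i\<bar>) ` {..<dim_vec v}))"

definition mat_inf_norm :: "real mat \<Rightarrow> real" where
  "mat_inf_norm A = Max (insert 0 ((\<lambda>i. \<Sum>j<dim_col A. \<bar>A $$ (i,j)\<bar>) ` {..<dim_row A}))"

primrec schwarz_iter :: "real mat \<Rightarrow> real vec \<Rightarrow> real vec \<Rightarrow> nat \<Rightarrow> real vec" where
  "schwarz_iter T v x0 0 = x0"
| "schwarz_iter T v x0 (Suc k) = T *\<^sub>v schwarz_iter T v x0 k + v"

end

theory Submission
  imports Defs "Jordan_Normal_Form.Determinant"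
begin

(* All matrices involved are five-point M-matrices: a barrier that is quadratic along grid lines
   yields a discrete maximum principle, hence invertibility and comparison with supersolutions.
   After the exact solve on the first subdomain (grid lines 0..m) the new values satisfy the
   homogeneous equations there and only see the old values on line m+1.  Since
   rho = eps/(eps + H_y) is the decaying root of the coarse-mesh recurrence, the barrier
   rho^(m-r) bounds them on line r by rho^(m-r) times those data; likewise the solve on the
   second subdomain is bounded by a constant barrier through the data on line m-1.  Hence
   |Q2 Q1| <= rho and |Q1 Q2| <= 1, and Q1 Q2 contracts by rho on the range of Q1, which contains
   every error after the first step. *)

lemma vec_inf_norm_ge: "i < dim_vec v \<Longrightarrow> \<bar>v $ i\<bar> \<le> vec_inf_norm v"
  unfolding vec_inf_norm_def by (intro Max_ge) auto

lemma vec_inf_norm_nonneg: "0 \<le> vec_inf_norm v"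
  unfolding vec_inf_norm_def by (intro Max_ge) auto

lemma vec_inf_norm_leI:
  assumes "0 \<le> c" "\<And>i. i < dim_vec v \<Longrightarrow> \<bar>v $ i\<bar> \<le> c"
  shows "vec_inf_norm v \<le> c"
  unfolding vec_inf_norm_def using assms by (subst Max_le_iff) auto

lemma vec_inf_norm_pos:
  assumes "v \<in> carrier_vec n" "v \<noteq> 0\<^sub>v n"
  shows "0 < vec_inf_norm v"
proof -
  obtain i where i: "i < n" "v $ i \<noteq> 0"
    using assms by (metis carrier_vecD eq_vecI index_zero_vec(1,2))
  have "0 < \<bar>v $ i\<bar>" using i by simp
  also have "\<dots> \<le> vec_inf_norm v" using i assms by (intro vec_inf_norm_ge) auto
  finally show ?thesis .
qed

lemma mat_inf_norm_ge_row_sum: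
  "i < dim_row A \<Longrightarrow> (\<Sum>j<dim_col A. \<bar>A $$ (i,j)\<bar>) \<le> mat_inf_norm A"
  unfolding mat_inf_norm_def by (intro Max_ge) auto

lemma mat_inf_norm_leI:
  assumes "0 \<le> c" "\<And>i. i < dim_row A \<Longrightarrow> (\<Sum>j<dim_col A. \<bar>A $$ (i,j)\<bar>) \<le> c"
  shows "mat_inf_norm A \<le> c"
  unfolding mat_inf_norm_def using assms by (subst Max_le_iff) auto

lemma row_scalar_prod_sum:
  "i < dim_row A \<Longrightarrow> dim_vec v = dim_col A \<Longrightarrow> row A i \<bullet> v = (\<Sum>j<dim_col A. A $$ (i,j) * v $ j)"
  by (simp add: scalar_prod_def row_def lessThan_atLeast0)

lemma col_scalar_prod_sum:
  "j < dim_col A \<Longrightarrow> dim_vec v = dim_row A \<Longrightarrow> col A j \<bullet> v = (\<Sum>i<dim_row A. A $$ (i,j) * v $ i)"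
  by (simp add: scalar_prod_def col_def lessThan_atLeast0)

lemma vec_inf_norm_mult_mat_vec_le:
  assumes "dim_vec v = dim_col A"
  shows "vec_inf_norm (A *\<^sub>v v) \<le> mat_inf_norm A * vec_inf_norm v"
proof (rule vec_inf_norm_leI)
  have "0 \<le> mat_inf_norm A" unfolding mat_inf_norm_def by (intro Max_ge) auto
  then show "0 \<le> mat_inf_norm A * vec_inf_norm v" by (simp add: vec_inf_norm_nonneg)
  fix i assume "i < dim_vec (A *\<^sub>v v)"
  then have i: "i < dim_row A" by simp
  have "\<bar>(A *\<^sub>v v) $ i\<bar> = \<bar>\<Sum>j<dim_col A. A $$ (i,j) * v $ j\<bar>"
    using i assms by (simp add: row_scalar_prod_sum)
  also have "\<dots> \<le> (\<Sum>j<dim_col A. \<bar>A $$ (i,j)\<bar> * vec_inf_norm v)"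
    by (rule order.trans[OF sum_abs sum_mono])
      (use assms vec_inf_norm_ge in \<open>auto simp: abs_mult intro: mult_left_mono\<close>)
  also have "\<dots> = (\<Sum>j<dim_col A. \<bar>A $$ (i,j)\<bar>) * vec_inf_norm v"
    by (simp add: sum_distrib_right)
  also have "\<dots> \<le> mat_inf_norm A * vec_inf_norm v"
    using i by (intro mult_right_mono mat_inf_norm_ge_row_sum vec_inf_norm_nonneg)
  finally show "\<bar>(A *\<^sub>v v) $ i\<bar> \<le> mat_inf_norm A * vec_inf_norm v" .
qed

text \<open>The induced norm is attained at a sign vector of the maximal row.\<close>
lemma mat_inf_norm_le_if_vec_bound:
  assumes "0 \<le> c"
    and "\<And>y. y \<in> carrier_vec (dim_col A) \<Longrightarrow> vec_inf_norm (A *\<^sub>v y) \<le> c * vec_inf_norm y"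
  shows "mat_inf_norm A \<le> c"
proof (rule mat_inf_norm_leI[OF assms(1)])
  fix i assume i: "i < dim_row A"
  define y where "y = vec (dim_col A) (\<lambda>j. sgn (A $$ (i,j)))"
  have y: "y \<in> carrier_vec (dim_col A)" by (simp add: y_def)
  have "vec_inf_norm y \<le> 1" by (rule vec_inf_norm_leI) (auto simp: y_def sgn_real_def)
  have "(\<Sum>j<dim_col A. \<bar>A $$ (i,j)\<bar>) = (A *\<^sub>v y) $ i"
    using i by (simp add: row_scalar_prod_sum y_def, intro sum.cong) (auto simp: sgn_real_def)
  also have "\<dots> \<le> vec_inf_norm (A *\<^sub>v y)"
    using i by (intro order.trans[OF abs_ge_self vec_inf_norm_ge]) simp
  also have "\<dots> \<le> c * vec_inf_norm y" using assms(2) y by blast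
  also have "\<dots> \<le> c" using \<open>vec_inf_norm y \<le> 1\<close> assms(1) by (simp add: mult_left_le)
  finally show "(\<Sum>j<dim_col A. \<bar>A $$ (i,j)\<bar>) \<le> c" .
qed

lemma minv_inverse:
  assumes A: "A \<in> carrier_mat n n"
    and ker: "\<And>v. v \<in> carrier_vec n \<Longrightarrow> A *\<^sub>v v = 0\<^sub>v n \<Longrightarrow> v = 0\<^sub>v n"
  shows "A * minv A = 1\<^sub>m n" "minv A \<in> carrier_mat n n"
proof -
  have "det A \<noteq> 0" using det_0_iff_vec_prod_zero_field[OF A] ker by auto
  from det_non_zero_imp_unit[OF A this, of "()"]
  have "mat_inverse A \<noteq> None" using mat_inverse(1)[OF A, of "()"] by auto
  then obtain B where "mat_inverse A = Some B" by auto
  then show "A * minv A = 1\<^sub>m n" "minv A \<in> carrier_mat n n"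
    using mat_inverse(2)[OF A] by (simp_all add: minv_def)
qed

text \<open>With \<open>t = min w/psi < 0\<close>, the row of \<open>A (w - t psi)\<close> at a minimising index is both
  \<open>\<le> 0\<close> and \<open>> 0\<close>.\<close>
lemma discrete_max_principle:
  fixes A :: "real mat"
  assumes A: "A \<in> carrier_mat n n"
    and off: "\<And>i j. i < n \<Longrightarrow> j < n \<Longrightarrow> i \<noteq> j \<Longrightarrow> A $$ (i,j) \<le> 0"
    and psi: "psi \<in> carrier_vec n" "\<And>i. i < n \<Longrightarrow> 0 < psi $ i"
      "\<And>i. i < n \<Longrightarrow> 0 < (A *\<^sub>v psi) $ i"
    and w: "w \<in> carrier_vec n" "\<And>i. i < n \<Longrightarrow> 0 \<le> (A *\<^sub>v w) $ i"
    and i0: "i0 < n"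
  shows "0 \<le> w $ i0"
proof (rule ccontr)
  assume neg: "\<not> 0 \<le> w $ i0"
  define f where "f j = w $ j / psi $ j" for j
  have "f ` {..<n} \<noteq> {}" using i0 by auto
  then obtain i where i: "i < n" "f i = Min (f ` {..<n})"
    using Min_in[OF finite_imageI[OF finite_lessThan]] by (metis imageE lessThan_iff)
  define t where "t = f i"
  have tmin: "t \<le> f j" if "j < n" for j using that by (simp add: t_def i(2))
  have "f i0 < 0" using neg psi(2)[OF i0] by (simp add: f_def divide_neg_pos)
  then have t: "t < 0" using tmin[OF i0] by simp
  have z: "0 \<le> w $ j - t * psi $ j" if "j < n" for j
    using tmin[OF that] psi(2)[OF that] by (simp add: f_def pos_le_divide_eq)
  have zi: "w $ i - t * psi $ i = 0" using psi(2)[OF i(1)] by (simp add: t_def f_def)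
  have "(\<Sum>j<n. A $$ (i,j) * (w $ j - t * psi $ j)) \<le> 0"
  proof (rule sum_nonpos)
    fix j assume "j \<in> {..<n}"
    then show "A $$ (i,j) * (w $ j - t * psi $ j) \<le> 0"
      using zi off[OF i(1), of j] z[of j] by (cases "j = i") (auto intro: mult_nonpos_nonneg)
  qed
  moreover have "(\<Sum>j<n. A $$ (i,j) * (w $ j - t * psi $ j)) = (A *\<^sub>v w) $ i - t * (A *\<^sub>v psi) $ i"
    using A w psi i
    by (simp add: row_scalar_prod_sum algebra_simps sum_subtractf sum_distrib_left)
  moreover have "0 < (A *\<^sub>v w) $ i - t * (A *\<^sub>v psi) $ i"
    using w(2)[OF i(1)] mult_neg_pos[OF t psi(3)[OF i(1)]] by linarith
  ultimately show False by linarith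
qed

text \<open>Five-point difference matrix on an \<open>n \<times> K\<close> grid in line ordering \<open>p = r * n + i\<close>
  (grid line \<open>r\<close>, position \<open>i\<close> on it): diagonal \<open>a r\<close>, horizontal neighbours \<open>-al\<close>,
  coefficient \<open>c r\<close> towards line \<open>r - 1\<close> and \<open>u r\<close> towards line \<open>r + 1\<close>.\<close>
definition stencil_mat ::
    "nat \<Rightarrow> nat \<Rightarrow> real \<Rightarrow> (nat \<Rightarrow> real) \<Rightarrow> (nat \<Rightarrow> real) \<Rightarrow> (nat \<Rightarrow> real) \<Rightarrow> real mat" where
  "stencil_mat n K al a c u = mat (n * K) (n * K) (\<lambda>(p,q).
      (if q = p then a (p div n) else 0)
    + (if 0 < p mod n \<and> q = p - 1 then - al else 0)
    + (if Suc (p mod n) < n \<and> q = Suc p then - al else 0)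
    + (if 0 < p div n \<and> q = p - n then c (p div n) else 0)
    + (if Suc (p div n) < K \<and> q = p + n then u (p div n) else 0))"

lemma dim_stencil_mat [simp]:
  "dim_row (stencil_mat n K al a c u) = n * K" "dim_col (stencil_mat n K al a c u) = n * K"
  by (simp_all add: stencil_mat_def)

lemma stencil_mat_carrier: "stencil_mat n K al a c u \<in> carrier_mat (n * K) (n * K)"
  by (simp add: carrier_matI)

lemma line_decomp_unique:
  fixes n r s i l :: nat
  assumes "i < n" "l < n" "s * n + l = r * n + i"
  shows "s = r \<and> l = i"
proof -
  have "s = (s * n + l) div n" "l = (s * n + l) mod n" using assms(2) by simp_all
  moreover have "r = (r * n + i) div n" "i = (r * n + i) mod n" using assms(1) by simp_all
  ultimately show ?thesis using assms(3) by metis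
qed

lemma line_index_eq_iff:
  fixes n r s i l :: nat
  assumes il: "i < n" "l < n"
  shows "s * n + l = r * n + i \<longleftrightarrow> s = r \<and> l = i"
    and "0 < i \<Longrightarrow> s * n + l = r * n + i - 1 \<longleftrightarrow> s = r \<and> Suc l = i"
    and "Suc i < n \<Longrightarrow> s * n + l = Suc (r * n + i) \<longleftrightarrow> s = r \<and> l = Suc i"
    and "0 < r \<Longrightarrow> s * n + l = r * n + i - n \<longleftrightarrow> Suc s = r \<and> l = i"
    and "s * n + l = r * n + i + n \<longleftrightarrow> s = Suc r \<and> l = i"
proof -
  show "s * n + l = r * n + i \<longleftrightarrow> s = r \<and> l = i"
    using line_decomp_unique[OF il] by auto
  show "s * n + l = r * n + i - 1 \<longleftrightarrow> s = r \<and> Suc l = i" if "0 < i"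
  proof -
    have "r * n + i - 1 = r * n + (i - 1)" using that by simp
    then show ?thesis using line_decomp_unique[of "i - 1" n l s r] il that by auto
  qed
  show "s * n + l = Suc (r * n + i) \<longleftrightarrow> s = r \<and> l = Suc i" if "Suc i < n"
    using line_decomp_unique[OF that il(2), of s r] by auto
  show "s * n + l = r * n + i - n \<longleftrightarrow> Suc s = r \<and> l = i" if "0 < r"
  proof -
    obtain r' where r': "r = Suc r'" using \<open>0 < r\<close> by (cases r) auto
    have "r * n + i - n = r' * n + i" by (simp add: r')
    then show ?thesis using line_decomp_unique[OF il, of s r'] r' by auto
  qed
  have "r * n + i + n = Suc r * n + i" by simp
  then show "s * n + l = r * n + i + n \<longleftrightarrow> s = Suc r \<and> l = i"
    using line_decomp_unique[OF il, of s "Suc r"] by auto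
qed

lemma index_stencil_mat_blockwise:
  assumes n: "0 < n" and pq: "p < n * K" "q < n * K"
  defines "r \<equiv> p div n" and "i \<equiv> p mod n" and "s \<equiv> q div n" and "l \<equiv> q mod n"
  shows "stencil_mat n K al a c u $$ (p,q) =
    (if r = s then (if i = l then a r else if i = l + 1 \<or> l = i + 1 then - al else 0)
     else if r = s + 1 then (if i = l then c r else 0)
     else if s = r + 1 then (if i = l then u r else 0) else 0)"
proof -
  have il: "i < n" "l < n" using n by (simp_all add: i_def l_def)
  have p: "p = r * n + i" and q: "q = s * n + l" by (simp_all add: r_def i_def s_def l_def)
  have sK: "s < K" using pq n by (simp add: s_def div_less_iff_less_mult mult.commute)
  note idx = line_index_eq_iff[OF il, where s = s and r = r, folded p q]
  have e1: "(q = p) = (s = r \<and> l = i)" using idx(1) by simp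
  have e2: "(0 < i \<and> q = p - 1) = (s = r \<and> Suc l = i)"
    using idx(2) by (cases "0 < i") auto
  have e3: "(Suc i < n \<and> q = Suc p) = (s = r \<and> l = Suc i)"
    using idx(3) il by (cases "Suc i < n") auto
  have e4: "(0 < r \<and> q = p - n) = (Suc s = r \<and> l = i)"
    using idx(4) by (cases "0 < r") auto
  have e5: "(Suc r < K \<and> q = p + n) = (s = Suc r \<and> l = i)"
    using idx(5) sK by auto
  have "stencil_mat n K al a c u $$ (p,q) = (if q = p then a r else 0)
    + (if 0 < i \<and> q = p - 1 then - al else 0)
    + (if Suc i < n \<and> q = Suc p then - al else 0)
    + (if 0 < r \<and> q = p - n then c r else 0)
    + (if Suc r < K \<and> q = p + n then u r else 0)"
    using pq by (simp add: stencil_mat_def r_def i_def)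
  also have "\<dots> = (if s = r \<and> l = i then a r else 0)
    + (if s = r \<and> Suc l = i then - al else 0)
    + (if s = r \<and> l = Suc i then - al else 0)
    + (if Suc s = r \<and> l = i then c r else 0)
    + (if s = Suc r \<and> l = i then u r else 0)"
    unfolding e1 e2 e3 e4 e5 ..
  also have "\<dots> = (if r = s then (if i = l then a r else if i = l + 1 \<or> l = i + 1 then - al else 0)
     else if r = s + 1 then (if i = l then c r else 0)
     else if s = r + 1 then (if i = l then u r else 0) else 0)"
  proof (cases "r = s")
    case False
    then show ?thesis by (cases "r = Suc s") auto
  qed auto
  finally show ?thesis .
qed

lemma blk_tridiag_eq_stencil_mat:
  assumes n: "0 < n"
    and blocks: "\<And>r. D r = tridiag_toeplitz n (a r) (- al)" "\<And>r. L r = c r \<cdot>\<^sub>m 1\<^sub>m n"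
      "\<And>r. U r = u r \<cdot>\<^sub>m 1\<^sub>m n"
  shows "blk_tridiag n K D L U = stencil_mat n K al a c u"
proof (rule eq_matI)
  fix p q assume "p < dim_row (stencil_mat n K al a c u)" "q < dim_col (stencil_mat n K al a c u)"
  then have pq: "p < n * K" "q < n * K" by simp_all
  then show "blk_tridiag n K D L U $$ (p,q) = stencil_mat n K al a c u $$ (p,q)"
    using n by (simp add: index_stencil_mat_blockwise blk_tridiag_def tridiag_toeplitz_def Let_def blocks)
qed (simp_all add: blk_tridiag_def)

lemma sum_if_eq_delta:
  fixes N t :: nat
  assumes "C \<Longrightarrow> t < N"
  shows "(\<Sum>q<N. (if C \<and> q = t then z else 0) * (g q :: real)) = (if C then z * g t else 0)"
proof (cases C)
  case True
  have "(\<Sum>q<N. (if C \<and> q = t then z else 0) * g q) = (\<Sum>q<N. if q = t then z * g q else 0)"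
    using True by (intro sum.cong) auto
  also have "\<dots> = z * g t" using assms True by (subst sum.delta[OF finite_lessThan]) simp
  finally show ?thesis using True by simp
qed simp

lemma line_index_bounds:
  fixes p n K :: nat
  assumes p: "p < n * K"
  shows "Suc (p mod n) < n \<Longrightarrow> Suc p < n * K" and "Suc (p div n) < K \<Longrightarrow> p + n < n * K"
proof -
  have n: "0 < n" using p by (cases n) auto
  have pd: "p = p div n * n + p mod n" by simp
  have "p div n < K" using p n by (simp add: div_less_iff_less_mult mult.commute)
  show "Suc p < n * K" if "Suc (p mod n) < n"
  proof -
    have "Suc p < p div n * n + n" using that pd by linarith
    also have "\<dots> = Suc (p div n) * n" by simp
    also have "\<dots> \<le> K * n" using \<open>p div n < K\<close> by (intro mult_right_mono) auto
    finally show ?thesis by (simp add: mult.commute)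
  qed
  show "p + n < n * K" if "Suc (p div n) < K"
  proof -
    have "p mod n < n" using n by simp
    then have "p + n < p div n * n + n + n" using pd by linarith
    also have "\<dots> = Suc (Suc (p div n)) * n" by simp
    also have "\<dots> \<le> K * n" using that by (intro mult_right_mono) auto
    finally show ?thesis by (simp add: mult.commute)
  qed
qed

lemma index_stencil_mult:
  assumes v: "v \<in> carrier_vec (n * K)" and p: "p < n * K"
  shows "(stencil_mat n K al a c u *\<^sub>v v) $ p = a (p div n) * v $ p
     + (if 0 < p mod n then - al * v $ (p - 1) else 0)
     + (if Suc (p mod n) < n then - al * v $ Suc p else 0)
     + (if 0 < p div n then c (p div n) * v $ (p - n) else 0)
     + (if Suc (p div n) < K then u (p div n) * v $ (p + n) else 0)"
proof -
  have "(stencil_mat n K al a c u *\<^sub>v v) $ p = (\<Sum>q<n * K.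
      (if True \<and> q = p then a (p div n) else 0) * v $ q
    + (if 0 < p mod n \<and> q = p - 1 then - al else 0) * v $ q
    + (if Suc (p mod n) < n \<and> q = Suc p then - al else 0) * v $ q
    + (if 0 < p div n \<and> q = p - n then c (p div n) else 0) * v $ q
    + (if Suc (p div n) < K \<and> q = p + n then u (p div n) else 0) * v $ q)"
  proof -
    have "(stencil_mat n K al a c u *\<^sub>v v) $ p = (\<Sum>q<n * K. stencil_mat n K al a c u $$ (p,q) * v $ q)"
      using v p by (simp add: row_scalar_prod_sum)
    then show ?thesis using p by (simp add: stencil_mat_def distrib_right)
  qed
  also have "\<dots> = a (p div n) * v $ p
     + (if 0 < p mod n then - al * v $ (p - 1) else 0)
     + (if Suc (p mod n) < n then - al * v $ Suc p else 0)
     + (if 0 < p div n then c (p div n) * v $ (p - n) else 0)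
     + (if Suc (p div n) < K then u (p div n) * v $ (p + n) else 0)"
    unfolding sum.distrib using p line_index_bounds[OF p]
    by (simp only: sum_if_eq_delta) simp
  finally show ?thesis .
qed

lemma line_index_shift:
  fixes p n :: nat
  assumes n: "0 < n"
  shows "0 < p mod n \<Longrightarrow> (p - 1) mod n = p mod n - 1 \<and> (p - 1) div n = p div n"
    and "Suc (p mod n) < n \<Longrightarrow> Suc p mod n = Suc (p mod n) \<and> Suc p div n = p div n"
    and "0 < p div n \<Longrightarrow> (p - n) mod n = p mod n \<and> (p - n) div n = p div n - 1"
    and "(p + n) mod n = p mod n \<and> (p + n) div n = Suc (p div n)"
proof -
  define r i where "r = p div n" "i = p mod n"
  have p: "p = r * n + i" and i: "i < n" using n by (simp_all add: r_i_def)
  have split: "(r' * n + j) mod n = j \<and> (r' * n + j) div n = r'" if "j < n" for r' j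
    using that by simp
  show "(p - 1) mod n = p mod n - 1 \<and> (p - 1) div n = p div n" if "0 < p mod n"
  proof -
    have "p - 1 = r * n + (i - 1)" using p that by (simp add: r_i_def)
    then show ?thesis using split[of "i - 1" r] i by (simp add: r_i_def)
  qed
  show "Suc p mod n = Suc (p mod n) \<and> Suc p div n = p div n" if "Suc (p mod n) < n"
  proof -
    have "Suc p = r * n + Suc i" using p by simp
    then show ?thesis using split[of "Suc i" r] that by (simp add: r_i_def)
  qed
  show "(p - n) mod n = p mod n \<and> (p - n) div n = p div n - 1" if "0 < p div n"
  proof -
    have "0 < r" using that by (simp add: r_i_def)
    then obtain r' where r': "r = Suc r'" by (cases r) auto
    have "p - n = r' * n + i" using p r' by simp
    then show ?thesis using split[of i r'] i r' by (simp add: r_i_def)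
  qed
  show "(p + n) mod n = p mod n \<and> (p + n) div n = Suc (p div n)"
    using n by simp
qed

lemma index_stencil_mult_line_const:
  assumes n: "0 < n" and p: "p < n * K"
  shows "(stencil_mat n K al a c u *\<^sub>v vec (n * K) (\<lambda>j. g (j div n))) $ p =
     (a (p div n) - (if 0 < p mod n then al else 0) - (if Suc (p mod n) < n then al else 0)) * g (p div n)
     + (if 0 < p div n then c (p div n) * g (p div n - 1) else 0)
     + (if Suc (p div n) < K then u (p div n) * g (Suc (p div n)) else 0)"
proof -
  let ?v = "vec (n * K) (\<lambda>j. g (j div n))"
  have "?v $ (p - 1) = g (p div n)" if "0 < p mod n"
  proof -
    have "p - 1 < n * K" using p by linarith
    then have "?v $ (p - 1) = g ((p - 1) div n)" by (rule index_vec)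
    then show ?thesis using line_index_shift(1)[OF n that] by simp
  qed
  moreover have "?v $ Suc p = g (p div n)" if "Suc (p mod n) < n"
    using line_index_bounds(1)[OF p that] line_index_shift(2)[OF n that] by simp
  moreover have "?v $ (p - n) = g (p div n - 1)" if "0 < p div n"
  proof -
    have "p - n < n * K" using p by linarith
    then have "?v $ (p - n) = g ((p - n) div n)" by (rule index_vec)
    then show ?thesis using line_index_shift(3)[OF n that] by simp
  qed
  moreover have "?v $ (p + n) = g (Suc (p div n))" if "Suc (p div n) < K"
    using line_index_bounds(2)[OF p that] line_index_shift(4)[OF n, of p] by simp
  moreover have "?v \<in> carrier_vec (n * K)" by simp
  note index_stencil_mult[OF this p]
  ultimately show ?thesis using p by (simp add: algebra_simps)
qed

text \<open>Only couplings to lines that exist enter the balance.\<close>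
definition stencil_dominant :: "nat \<Rightarrow> nat \<Rightarrow> real \<Rightarrow> (nat \<Rightarrow> real) \<Rightarrow> (nat \<Rightarrow> real) \<Rightarrow> (nat \<Rightarrow> real) \<Rightarrow> bool" where
  "stencil_dominant n K al a c u \<longleftrightarrow> 0 < n \<and> 0 < al \<and> (\<forall>r<K. c r \<le> 0 \<and> u r \<le> 0 \<and>
     2 * al \<le> a r + (if 0 < r then c r else 0) + (if Suc r < K then u r else 0))"

lemma stencil_mat_offdiag_nonpos:
  assumes "stencil_dominant n K al a c u" "p < n * K" "q < n * K" "p \<noteq> q"
  shows "stencil_mat n K al a c u $$ (p,q) \<le> 0"
proof -
  have "0 < n" using assms(1) by (simp add: stencil_dominant_def)
  then have "p div n < K" using assms(2) by (simp add: div_less_iff_less_mult mult.commute)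
  then have "c (p div n) \<le> 0" "u (p div n) \<le> 0" "0 < al"
    using assms(1) by (auto simp: stencil_dominant_def)
  then show ?thesis using assms(2-4) by (auto simp: stencil_mat_def)
qed

text \<open>The barrier along a grid line: its second difference is \<open>-2\<close>, and it vanishes at the
  positions \<open>-1\<close> and \<open>n\<close> just outside the line.\<close>
definition barrier_profile :: "nat \<Rightarrow> real \<Rightarrow> real" where
  "barrier_profile n x = real n + x * (real n - 1 - x)"

definition line_barrier :: "nat \<Rightarrow> nat \<Rightarrow> real vec" where
  "line_barrier n K = vec (n * K) (\<lambda>p. barrier_profile n (real (p mod n)))"

lemma barrier_profile_pos: "i < n \<Longrightarrow> 0 < barrier_profile n (real i)"
proof -
  assume "i < n"
  then have "real i + 1 \<le> real n" by (metis Suc_leI of_nat_Suc of_nat_le_iff add.commute)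
  then show ?thesis using \<open>i < n\<close> by (simp add: barrier_profile_def add_pos_nonneg)
qed

lemma index_stencil_mult_line_barrier:
  assumes n: "0 < n" and p: "p < n * K"
  defines "f \<equiv> barrier_profile n" and "r \<equiv> p div n" and "i \<equiv> p mod n"
  shows "(stencil_mat n K al a c u *\<^sub>v line_barrier n K) $ p = a r * f (real i)
     + (if 0 < i then - al * f (real i - 1) else 0)
     + (if Suc i < n then - al * f (real i + 1) else 0)
     + (if 0 < r then c r * f (real i) else 0)
     + (if Suc r < K then u r * f (real i) else 0)"
proof -
  have psi: "line_barrier n K $ q = f (real (q mod n))" if "q < n * K" for q
    using that by (simp add: line_barrier_def f_def)
  have "0 < i \<Longrightarrow> line_barrier n K $ (p - 1) = f (real i - 1)"
    using line_index_shift(1)[OF n, of p] p psi[of "p - 1"] by (simp add: i_def of_nat_diff)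
  moreover have "Suc i < n \<Longrightarrow> line_barrier n K $ Suc p = f (real i + 1)"
    using line_index_shift(2)[OF n, of p] line_index_bounds(1)[OF p] psi[of "Suc p"]
    by (simp add: i_def add.commute)
  moreover have "0 < r \<Longrightarrow> line_barrier n K $ (p - n) = f (real i)"
    using line_index_shift(3)[OF n, of p] p psi[of "p - n"] by (simp add: r_def i_def)
  moreover have "Suc r < K \<Longrightarrow> line_barrier n K $ (p + n) = f (real i)"
    using line_index_shift(4)[OF n, of p] line_index_bounds(2)[OF p] psi[of "p + n"]
    by (simp add: r_def i_def)
  ultimately show ?thesis
    using index_stencil_mult[OF _ p, of "line_barrier n K"] psi[OF p]
    by (simp add: line_barrier_def r_def[symmetric] i_def[symmetric])
qed

lemma stencil_mult_line_barrier_pos: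
  assumes dom: "stencil_dominant n K al a c u" and p: "p < n * K"
  shows "0 < (stencil_mat n K al a c u *\<^sub>v line_barrier n K) $ p"
proof -
  have n: "0 < n" and al: "0 < al" using dom by (simp_all add: stencil_dominant_def)
  define r i f where "r = p div n" "i = p mod n" "f = barrier_profile n"
  have i: "i < n" using n by (simp add: r_i_f_def)
  have "r < K" using p n by (simp add: r_i_f_def div_less_iff_less_mult mult.commute)
  then have "2 * al \<le> a r + (if 0 < r then c r else 0) + (if Suc r < K then u r else 0)"
    using dom by (auto simp: stencil_dominant_def)
  then have "2 * al * f (real i) \<le> (a r + (if 0 < r then c r else 0)
      + (if Suc r < K then u r else 0)) * f (real i)"
    using barrier_profile_pos[OF i] by (intro mult_right_mono) (simp_all add: r_i_f_def)
  moreover have "f (real i - 1) = 0" if "i = 0" using that by (simp add: r_i_f_def barrier_profile_def)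
  moreover have "f (real i + 1) = 0" if "\<not> Suc i < n"
  proof -
    have "real n = real i + 1" using i that by (metis Suc_lessI of_nat_Suc add.commute)
    then show ?thesis by (simp add: r_i_f_def barrier_profile_def algebra_simps)
  qed
  ultimately have "2 * al * f (real i) - al * f (real i - 1) - al * f (real i + 1)
      \<le> (stencil_mat n K al a c u *\<^sub>v line_barrier n K) $ p"
    unfolding index_stencil_mult_line_barrier[OF n p] r_i_f_def[symmetric]
    by (cases "0 < i"; cases "Suc i < n") (auto simp: algebra_simps)
  moreover have "2 * al * f (real i) - al * f (real i - 1) - al * f (real i + 1) = 2 * al"
    by (simp add: r_i_f_def barrier_profile_def algebra_simps)
  ultimately show ?thesis using al by linarith
qed

lemma stencil_nonneg_if_image_nonneg:
  assumes dom: "stencil_dominant n K al a c u" and w: "w \<in> carrier_vec (n * K)"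
    and nonneg: "\<And>p. p < n * K \<Longrightarrow> 0 \<le> (stencil_mat n K al a c u *\<^sub>v w) $ p"
    and p: "p < n * K"
  shows "0 \<le> w $ p"
proof (rule discrete_max_principle[OF stencil_mat_carrier _ _ _ _ w nonneg p])
  have "0 < n" using dom by (simp add: stencil_dominant_def)
  then show "0 < line_barrier n K $ q" if "q < n * K" for q
    using that barrier_profile_pos[of "q mod n" n] by (simp add: line_barrier_def)
qed (use stencil_mat_offdiag_nonpos[OF dom] stencil_mult_line_barrier_pos[OF dom] in
     \<open>auto simp: line_barrier_def\<close>)

lemma stencil_comparison:
  assumes dom: "stencil_dominant n K al a c u"
    and w: "w \<in> carrier_vec (n * K)" and phi: "phi \<in> carrier_vec (n * K)"
    and le: "\<And>p. p < n * K \<Longrightarrow> \<bar>(stencil_mat n K al a c u *\<^sub>v w) $ p\<bar> \<le> (stencil_mat n K al a c u *\<^sub>v phi) $ p"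
    and p: "p < n * K"
  shows "\<bar>w $ p\<bar> \<le> phi $ p"
proof -
  let ?A = "stencil_mat n K al a c u"
  have "0 \<le> (phi - w) $ p"
  proof (rule stencil_nonneg_if_image_nonneg[OF dom _ _ p])
    fix q assume "q < n * K"
    then show "0 \<le> (?A *\<^sub>v (phi - w)) $ q"
      using le[of q] mult_minus_distrib_mat_vec[OF stencil_mat_carrier phi w] by simp
  qed (use phi w in simp)
  moreover have "0 \<le> (phi + w) $ p"
  proof (rule stencil_nonneg_if_image_nonneg[OF dom _ _ p])
    fix q assume "q < n * K"
    then show "0 \<le> (?A *\<^sub>v (phi + w)) $ q"
      using le[of q] mult_add_distrib_mat_vec[OF stencil_mat_carrier phi w] by simp
  qed (use phi w in simp)
  ultimately show ?thesis using p phi w by auto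
qed

lemma stencil_minv:
  assumes dom: "stencil_dominant n K al a c u"
  shows "stencil_mat n K al a c u * minv (stencil_mat n K al a c u) = 1\<^sub>m (n * K)"
    and "minv (stencil_mat n K al a c u) \<in> carrier_mat (n * K) (n * K)"
proof -
  have "w = 0\<^sub>v (n * K)" if w: "w \<in> carrier_vec (n * K)"
    and z: "stencil_mat n K al a c u *\<^sub>v w = 0\<^sub>v (n * K)" for w
  proof (rule eq_vecI)
    fix p assume "p < dim_vec (0\<^sub>v (n * K))"
    then have p: "p < n * K" by simp
    have "\<bar>w $ p\<bar> \<le> 0\<^sub>v (n * K) $ p"
      by (rule stencil_comparison[OF dom w _ _ p]) (use z in \<open>auto simp: row_def\<close>)
    then show "w $ p = 0\<^sub>v (n * K) $ p" using p by simp
  qed (use w in simp)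
  then show "stencil_mat n K al a c u * minv (stencil_mat n K al a c u) = 1\<^sub>m (n * K)"
    and "minv (stencil_mat n K al a c u) \<in> carrier_mat (n * K) (n * K)"
    using minv_inverse[OF stencil_mat_carrier] by blast+
qed

text \<open>The barrier is \<open>g (p div n)\<close>, constant along grid lines, so its horizontal
  differences contribute at least \<open>-2 al g\<close>; \<open>data\<close> bounds it from below.\<close>
lemma stencil_line_bound:
  assumes dom: "stencil_dominant n K al a c u" and w: "w \<in> carrier_vec (n * K)"
    and g: "\<And>r. 0 \<le> g r"
    and data: "\<And>p. p < n * K \<Longrightarrow> \<bar>(stencil_mat n K al a c u *\<^sub>v w) $ p\<bar> \<le>
        (a (p div n) - 2 * al) * g (p div n)
        + (if 0 < p div n then c (p div n) * g (p div n - 1) else 0)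
        + (if Suc (p div n) < K then u (p div n) * g (Suc (p div n)) else 0)"
    and p: "p < n * K"
  shows "\<bar>w $ p\<bar> \<le> g (p div n)"
proof -
  have n: "0 < n" and al: "0 < al" using dom by (simp_all add: stencil_dominant_def)
  define phi where "phi = vec (n * K) (\<lambda>j. g (j div n))"
  have "\<bar>w $ p\<bar> \<le> phi $ p"
  proof (rule stencil_comparison[OF dom w _ _ p])
    fix q assume q: "q < n * K"
    have "(a (q div n) - 2 * al) * g (q div n) \<le> (a (q div n) - (if 0 < q mod n then al else 0)
        - (if Suc (q mod n) < n then al else 0)) * g (q div n)"
      using g al by (intro mult_right_mono) auto
    then show "\<bar>(stencil_mat n K al a c u *\<^sub>v w) $ q\<bar> \<le> (stencil_mat n K al a c u *\<^sub>v phi) $ q"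
      using data[OF q] unfolding phi_def index_stencil_mult_line_const[OF n q] by linarith
  qed (simp add: phi_def)
  then show ?thesis using p by (simp add: phi_def)
qed

lemma schwarz_iter_carrier:
  assumes "T \<in> carrier_mat S S" "v \<in> carrier_vec S" "x0 \<in> carrier_vec S"
  shows "schwarz_iter T v x0 k \<in> carrier_vec S"
  by (induction k) (use assms in auto)

lemma schwarz_iter_error:
  fixes T :: "real mat"
  assumes T: "T \<in> carrier_mat S S" and x: "x \<in> carrier_vec S" and x0: "x0 \<in> carrier_vec S"
  defines "v \<equiv> (1\<^sub>m S - T) *\<^sub>v x"
  shows "x - schwarz_iter T v x0 (Suc k) = T *\<^sub>v (x - schwarz_iter T v x0 k)"
proof -
  have v: "v = x - T *\<^sub>v x"
    unfolding v_def using T x by (subst minus_mult_distrib_mat_vec[of _ S S]) auto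
  have "schwarz_iter T v x0 k \<in> carrier_vec S"
    using schwarz_iter_carrier[OF T _ x0] T x by (simp add: v)
  then show ?thesis
    using T x by (intro eq_vecI) (auto simp: v mult_minus_distrib_mat_vec)
qed

lemma geometric_decay:
  fixes f :: "nat \<Rightarrow> real"
  assumes "f 1 \<le> C * f 0" "\<And>k. f (Suc (Suc k)) \<le> r * f (Suc k)" "0 \<le> r"
  shows "f (Suc k) \<le> r ^ k * (C * f 0)"
proof (induction k)
  case (Suc k)
  have "f (Suc (Suc k)) \<le> r * f (Suc k)" by (rule assms(2))
  also have "\<dots> \<le> r * (r ^ k * (C * f 0))" using Suc assms(3) by (simp add: mult_left_mono)
  finally show ?case by (simp add: mult.assoc)
qed (use assms(1) in simp)

locale shishkin_mesh =
  fixes eps beta :: real and M N :: nat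
  assumes eps_pos: "0 < eps" and beta_nonneg: "0 \<le> beta" and M_ge_4: "4 \<le> M" and N_ge_3: "3 \<le> N"
begin

definition "n = nn N"
definition "m = mm M"
definition "al = eps / (Hx N)^2"
definition "H = Hy eps M"
definition "h = hy eps M"
definition "rho = eps / (eps + H)"

text \<open>The \<open>y\<close>-parts of the diagonal entries \<open>a\<^sub>H\<close>, \<open>a\<close>, \<open>a\<^sub>h\<close>.\<close>
definition "yH = 2 * eps / H^2 + 1 / H"
definition "ym = 2 * eps / (H * h) + 1 / H"
definition "yh = 2 * eps / h^2 + 1 / h"

lemma n_ge_2: "2 \<le> n" using N_ge_3 by (simp add: n_def nn_def)
lemma m_ge_1: "1 \<le> m" using M_ge_4 by (simp add: m_def mm_def)

lemma tau_y_pos: "0 < tau_y eps M" and tau_y_le: "tau_y eps M \<le> 1/2"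
proof -
  have "0 < ln (real M)" using M_ge_4 by simp
  then show "0 < tau_y eps M" using eps_pos by (simp add: tau_y_def)
  show "tau_y eps M \<le> 1/2" by (simp add: tau_y_def)
qed

lemma H_pos: "0 < H" using tau_y_le M_ge_4 by (simp add: H_def Hy_def)
lemma h_pos: "0 < h" using tau_y_pos M_ge_4 by (simp add: h_def hy_def)
lemma al_pos: "0 < al" using eps_pos N_ge_3 by (simp add: al_def Hx_def)
lemma rho_pos: "0 < rho" and rho_less_1: "rho < 1" using eps_pos H_pos by (simp_all add: rho_def)

lemma aH_eq: "aH eps beta M N = 2 * al + yH + beta"
  by (simp add: aH_def al_def yH_def H_def)
lemma aa_eq: "aa eps beta M N = 2 * al + ym + beta"
  by (simp add: aa_def al_def ym_def H_def h_def)
lemma ah_eq: "ah eps beta M N = 2 * al + yh + beta"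
  by (simp add: ah_def al_def yh_def h_def)

lemma yH_balance: "yH + dH eps M + eH eps M = 0"
  using H_pos by (simp add: yH_def dH_def eH_def H_def[symmetric] field_simps power2_eq_square)
lemma ym_balance: "ym + dd eps M + ee eps M = 0"
proof -
  define D where "D = H + h"
  have D: "0 < D" using H_pos h_pos by (simp add: D_def)
  have "ym + dd eps M + ee eps M = 2 * eps / (H * h) + 1 / H + (- 2 * eps / (H * D) - 1 / H)
      + (- 2 * eps / (h * D))"
    by (simp add: ym_def dd_def ee_def D_def H_def h_def)
  also have "\<dots> = 2 * eps * (D - h - H) / (H * h * D)"
    using H_pos h_pos D by (simp add: field_simps)
  finally show ?thesis by (simp add: D_def)
qed

lemma yh_balance: "yh + dh eps M + eh eps M = 0"
  using h_pos by (simp add: yh_def dh_def eh_def h_def[symmetric] field_simps power2_eq_square)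

lemma coeffs_neg:
  "dH eps M < 0" "dd eps M < 0" "dh eps M < 0" "eH eps M < 0" "ee eps M < 0" "eh eps M < 0"
proof -
  have "0 < eps / H^2" "0 < 1 / H" "0 < eps / h^2" "0 < 1 / h"
    "0 < 2 * eps / (H * (H + h))" "0 < 2 * eps / (h * (H + h))"
    using H_pos h_pos eps_pos by simp_all
  then show "dH eps M < 0" "dd eps M < 0" "dh eps M < 0" "eH eps M < 0" "ee eps M < 0" "eh eps M < 0"
    unfolding dH_def dd_def dh_def eH_def ee_def eh_def H_def[symmetric] h_def[symmetric] by linarith+
qed

text \<open>\<open>rho\<close> is the root in \<open>(0,1)\<close> of the characteristic polynomial of the coarse-mesh recurrence
  \<open>dH w\<^sub>r\<^sub>-\<^sub>1 + yH w\<^sub>r + eH w\<^sub>r\<^sub>+\<^sub>1 = 0\<close>, so \<open>rho^(m - r)\<close> solves it.\<close>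
lemma rho_root: "dH eps M * rho^2 + yH * rho + eH eps M = 0"
proof -
  define E where "E = eps + H"
  have E: "0 < E" using H_pos eps_pos by (simp add: E_def)
  have "dH eps M * rho^2 + yH * rho + eH eps M
      = (- eps / H^2 - 1 / H) * (eps / E)^2 + (2 * eps / H^2 + 1 / H) * (eps / E) - eps / H^2"
    by (simp add: dH_def eH_def yH_def rho_def E_def H_def)
  also have "\<dots> = eps * (- (eps + H) * eps + (2 * eps + H) * E - E^2) / (H^2 * E^2)"
    using H_pos E by (simp add: field_simps power2_eq_square)
  also have "- (eps + H) * eps + (2 * eps + H) * E - E^2 = 0"
    by (simp add: E_def algebra_simps power2_eq_square)
  finally show ?thesis by simp
qed

lemma rho_root_nonneg: "0 \<le> yH * rho + eH eps M"
proof -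
  have "dH eps M * rho^2 \<le> 0" using coeffs_neg(1) by (simp add: mult_nonpos_nonneg)
  then show ?thesis using rho_root by linarith
qed

definition "a_full r = (if r < m then aH eps beta M N else if r = m then aa eps beta M N else ah eps beta M N)"
definition "c_full r = (if r < m then dH eps M else if r = m then dd eps M else dh eps M)"
definition "u_full r = (if r < m then eH eps M else if r = m then ee eps M else eh eps M)"
definition "a1 r = (if r < m then aH eps beta M N else aa eps beta M N)"
definition "c1 r = (if r < m then dH eps M else dd eps M)"
definition "a2 r = (if r = 0 then aa eps beta M N else ah eps beta M N)"
definition "u2 r = (if r = 0 then ee eps M else eh eps M)"

abbreviation "A \<equiv> calA eps beta M N"
abbreviation "A1 \<equiv> matA1 eps beta M N"
abbreviation "A2 \<equiv> matA2 eps beta M N"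

lemma calA_eq_stencil: "A = stencil_mat n (2 * m + 1) al a_full c_full u_full"
  unfolding calA_def n_def[symmetric] m_def[symmetric]
  by (rule blk_tridiag_eq_stencil_mat)
    (use n_ge_2 in \<open>simp_all add: matAH_def matA_def matAh_def matCH_def matC_def matCh_def matBH_def
        matB_def matBh_def a_full_def c_full_def u_full_def al_def n_def\<close>)

lemma A1_eq_stencil: "A1 = stencil_mat n (m + 1) al a1 c1 (\<lambda>_. eH eps M)"
  unfolding matA1_def n_def[symmetric] m_def[symmetric]
  by (rule blk_tridiag_eq_stencil_mat)
    (use n_ge_2 in \<open>simp_all add: matAH_def matA_def matCH_def matC_def matBH_def a1_def c1_def
        al_def n_def\<close>)

lemma A2_eq_stencil: "A2 = stencil_mat n (m + 1) al a2 (\<lambda>_. dh eps M) u2"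
  unfolding matA2_def n_def[symmetric] m_def[symmetric]
  by (rule blk_tridiag_eq_stencil_mat)
    (use n_ge_2 in \<open>simp_all add: matA_def matAh_def matCh_def matB_def matBh_def a2_def u2_def
        al_def n_def\<close>)

lemma dominant_full: "stencil_dominant n (2 * m + 1) al a_full c_full u_full"
  unfolding stencil_dominant_def
proof (intro conjI allI impI)
  show "0 < n" "0 < al" using n_ge_2 al_pos by auto
  fix r assume r: "r < 2 * m + 1"
  consider "r < m" | "r = m" | "m < r" by linarith
  then show "c_full r \<le> 0" "u_full r \<le> 0"
    "2 * al \<le> a_full r + (if 0 < r then c_full r else 0) + (if Suc r < 2 * m + 1 then u_full r else 0)"
    by cases (use coeffs_neg yH_balance ym_balance yh_balance beta_nonneg m_ge_1 r in
        \<open>auto simp: a_full_def c_full_def u_full_def aH_eq aa_eq ah_eq\<close>)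
qed

lemma dominant_A1: "stencil_dominant n (m + 1) al a1 c1 (\<lambda>_. eH eps M)"
  unfolding stencil_dominant_def
proof (intro conjI allI impI)
  show "0 < n" "0 < al" using n_ge_2 al_pos by auto
  fix r assume r: "r < m + 1"
  consider "r < m" | "r = m" using r by linarith
  then show "c1 r \<le> 0" "eH eps M \<le> 0"
    "2 * al \<le> a1 r + (if 0 < r then c1 r else 0) + (if Suc r < m + 1 then eH eps M else 0)"
    by cases (use coeffs_neg yH_balance ym_balance beta_nonneg m_ge_1 in
        \<open>auto simp: a1_def c1_def aH_eq aa_eq\<close>)
qed

lemma dominant_A2: "stencil_dominant n (m + 1) al a2 (\<lambda>_. dh eps M) u2"
  unfolding stencil_dominant_def
proof (intro conjI allI impI)
  show "0 < n" "0 < al" using n_ge_2 al_pos by auto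
  fix r assume r: "r < m + 1"
  consider "r = 0" | "0 < r" by linarith
  then show "dh eps M \<le> 0" "u2 r \<le> 0"
    "2 * al \<le> a2 r + (if 0 < r then dh eps M else 0) + (if Suc r < m + 1 then u2 r else 0)"
    by cases (use coeffs_neg ym_balance yh_balance beta_nonneg m_ge_1 in
        \<open>auto simp: a2_def u2_def aa_eq ah_eq\<close>)
qed

lemma coarse_barrier_supersolution:
  assumes Y: "0 \<le> Y" and r: "r < m"
  shows "0 \<le> (yH + beta) * (Y * rho ^ (m - r))
    + (if 0 < r then dH eps M * (Y * rho ^ (m - (r - 1))) else 0) + eH eps M * (Y * rho ^ (m - Suc r))"
proof -
  define k where "k = m - Suc r"
  define Z where "Z = Y * rho ^ k"
  have Z: "0 \<le> Z" using Y rho_pos by (simp add: Z_def)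
  have mr: "m - r = Suc k" "m - Suc r = k" using r by (simp_all add: k_def)
  have pow: "Y * rho ^ (m - r) = Z * rho" "Y * rho ^ (m - Suc r) = Z"
    unfolding mr Z_def by (simp_all add: mult_ac)
  have "0 \<le> beta * (Z * rho)" using beta_nonneg Z rho_pos by simp
  show ?thesis
  proof (cases "0 < r")
    case True
    have "m - (r - 1) = Suc (Suc k)" using r True by (simp add: k_def)
    then have "Y * rho ^ (m - (r - 1)) = Z * rho^2"
      unfolding Z_def by (simp add: power2_eq_square mult_ac)
    then have "(yH + beta) * (Y * rho ^ (m - r)) + dH eps M * (Y * rho ^ (m - (r - 1)))
        + eH eps M * (Y * rho ^ (m - Suc r))
        = Z * (dH eps M * rho^2 + yH * rho + eH eps M) + beta * (Z * rho)"
      unfolding pow by (simp add: algebra_simps)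
    then show ?thesis using True rho_root \<open>0 \<le> beta * (Z * rho)\<close> by simp
  next
    case False
    have "(yH + beta) * (Y * rho ^ (m - r)) + eH eps M * (Y * rho ^ (m - Suc r))
        = Z * (yH * rho + eH eps M) + beta * (Z * rho)"
      unfolding pow by (simp add: algebra_simps)
    moreover have "0 \<le> Z * (yH * rho + eH eps M)" using Z rho_root_nonneg by simp
    ultimately show ?thesis using False \<open>0 \<le> beta * (Z * rho)\<close> by simp
  qed
qed

lemma interface_barrier_supersolution:
  assumes "0 \<le> Y"
  shows "- ee eps M * Y \<le> (ym + beta) * Y + dd eps M * (Y * rho)"
proof -
  have "0 \<le> Y * (dd eps M * (rho - 1))"
    using assms coeffs_neg(2) rho_less_1 by (simp add: mult_nonpos_nonpos)
  moreover have "0 \<le> Y * beta" using assms beta_nonneg by simp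
  moreover have ym: "ym = - dd eps M - ee eps M" using ym_balance by linarith
  have "(ym + beta) * Y + dd eps M * (Y * rho) = - ee eps M * Y + Y * beta + Y * (dd eps M * (rho - 1))"
    unfolding ym by (simp add: algebra_simps)
  ultimately show ?thesis by linarith
qed

abbreviation "S \<equiv> n * (2 * m + 1)"
abbreviation "s \<equiv> n * (m + 1)"
abbreviation "Q1 \<equiv> matQ1 eps beta M N"
abbreviation "Q2 \<equiv> matQ2 eps beta M N"

lemma sz_eq: "sz M N = S" by (simp add: sz_def n_def m_def)
lemma sub_sz_eq: "sub_sz M N = s" by (simp add: sub_sz_def n_def m_def)
lemma S_split: "S = n * m + s" by (simp add: algebra_simps)
lemma s_le_S: "s \<le> S" by (simp add: S_split)

lemma dim_R [simp]:
  "dim_row (matR1 M N) = s" "dim_col (matR1 M N) = S"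
  "dim_row (matR2 M N) = s" "dim_col (matR2 M N) = S"
  by (simp_all add: matR1_def matR2_def sz_eq sub_sz_eq)

lemma R_carrier: "matR1 M N \<in> carrier_mat s S" "matR2 M N \<in> carrier_mat s S"
  by (simp_all add: carrier_matI)

lemma R1_mult_vec:
  assumes y: "y \<in> carrier_vec S"
  shows "matR1 M N *\<^sub>v y = vec s (\<lambda>i. y $ i)"
proof (rule eq_vecI)
  fix i assume "i < dim_vec (vec s (\<lambda>i. y $ i))"
  then have i: "i < s" by simp
  have "(matR1 M N *\<^sub>v y) $ i = (\<Sum>j<S. matR1 M N $$ (i,j) * y $ j)"
    using i y by (simp add: row_scalar_prod_sum)
  also have "\<dots> = (\<Sum>j<S. if j = i then y $ j else 0)"
    using i by (intro sum.cong) (auto simp: matR1_def sz_eq sub_sz_eq)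
  also have "\<dots> = y $ i" using i s_le_S by (subst sum.delta) auto
  finally show "(matR1 M N *\<^sub>v y) $ i = vec s (\<lambda>i. y $ i) $ i" using i by simp
qed simp

lemma R2_mult_vec:
  assumes y: "y \<in> carrier_vec S"
  shows "matR2 M N *\<^sub>v y = vec s (\<lambda>i. y $ (i + n * m))"
proof (rule eq_vecI)
  fix i assume "i < dim_vec (vec s (\<lambda>i. y $ (i + n * m)))"
  then have i: "i < s" by simp
  have "(matR2 M N *\<^sub>v y) $ i = (\<Sum>j<S. matR2 M N $$ (i,j) * y $ j)"
    using i y by (simp add: row_scalar_prod_sum)
  also have "\<dots> = (\<Sum>j<S. if j = i + n * m then y $ j else 0)"
    using i by (intro sum.cong) (auto simp: matR2_def sz_eq sub_sz_eq n_def m_def)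
  also have "\<dots> = y $ (i + n * m)"
  proof -
    have "i + n * m < S" using i S_split by linarith
    then show ?thesis by (subst sum.delta) auto
  qed
  finally show "(matR2 M N *\<^sub>v y) $ i = vec s (\<lambda>i. y $ (i + n * m)) $ i" using i by simp
qed simp

lemma R1_transpose_mult_vec:
  assumes u: "u \<in> carrier_vec s"
  shows "transpose_mat (matR1 M N) *\<^sub>v u = vec S (\<lambda>j. if j < s then u $ j else 0)"
proof (rule eq_vecI)
  fix j assume "j < dim_vec (vec S (\<lambda>j. if j < s then u $ j else 0))"
  then have j: "j < S" by simp
  have "(transpose_mat (matR1 M N) *\<^sub>v u) $ j = (\<Sum>i<s. matR1 M N $$ (i,j) * u $ i)"
    using j u col_scalar_prod_sum[of j "matR1 M N" u] by (simp add: carrier_vecD)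
  also have "\<dots> = (\<Sum>i<s. if i = j then u $ i else 0)"
    using j by (intro sum.cong) (auto simp: matR1_def sz_eq sub_sz_eq)
  also have "\<dots> = (if j < s then u $ j else 0)" by (subst sum.delta) auto
  finally show "(transpose_mat (matR1 M N) *\<^sub>v u) $ j = vec S (\<lambda>j. if j < s then u $ j else 0) $ j"
    using j by simp
qed simp

lemma R2_transpose_mult_vec:
  assumes u: "u \<in> carrier_vec s"
  shows "transpose_mat (matR2 M N) *\<^sub>v u = vec S (\<lambda>j. if n * m \<le> j then u $ (j - n * m) else 0)"
proof (rule eq_vecI)
  fix j assume "j < dim_vec (vec S (\<lambda>j. if n * m \<le> j then u $ (j - n * m) else 0))"
  then have j: "j < S" by simp
  have "(transpose_mat (matR2 M N) *\<^sub>v u) $ j = (\<Sum>i<s. matR2 M N $$ (i,j) * u $ i)"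
    using j u col_scalar_prod_sum[of j "matR2 M N" u] by (simp add: carrier_vecD)
  also have "\<dots> = (\<Sum>i<s. if i = j - n * m then (if n * m \<le> j then u $ i else 0) else 0)"
    using j by (intro sum.cong) (auto simp: matR2_def sz_eq sub_sz_eq n_def m_def)
  also have "\<dots> = (if n * m \<le> j then u $ (j - n * m) else 0)"
    using j by (subst sum.delta) (auto simp: S_split)
  finally show "(transpose_mat (matR2 M N) *\<^sub>v u) $ j
      = vec S (\<lambda>j. if n * m \<le> j then u $ (j - n * m) else 0) $ j"
    using j by simp
qed simp

lemma calA_carrier: "A \<in> carrier_mat S S"
  unfolding calA_eq_stencil by (rule stencil_mat_carrier)

lemma minv_calA_carrier: "minv A \<in> carrier_mat S S"
  unfolding calA_eq_stencil by (rule stencil_minv(2)[OF dominant_full])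

lemma A1_minv: "A1 * minv A1 = 1\<^sub>m s" "minv A1 \<in> carrier_mat s s"
  unfolding A1_eq_stencil by (rule stencil_minv[OF dominant_A1])+

lemma A2_minv: "A2 * minv A2 = 1\<^sub>m s" "minv A2 \<in> carrier_mat s s"
  unfolding A2_eq_stencil by (rule stencil_minv[OF dominant_A2])+

lemma one_minus_matP_mult_vec:
  assumes R: "R \<in> carrier_mat s S" and Ai: "minv Ai \<in> carrier_mat s s" and y: "y \<in> carrier_vec S"
  shows "(1\<^sub>m S - matP R Ai A) *\<^sub>v y = y - transpose_mat R *\<^sub>v (minv Ai *\<^sub>v (R *\<^sub>v (A *\<^sub>v y)))"
    and "1\<^sub>m S - matP R Ai A \<in> carrier_mat S S"
proof -
  have RT: "transpose_mat R \<in> carrier_mat S s" using R by simp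
  have P: "matP R Ai A \<in> carrier_mat S S"
    unfolding matP_def using RT Ai R calA_carrier by (intro mult_carrier_mat) auto
  then show "1\<^sub>m S - matP R Ai A \<in> carrier_mat S S" by (rule minus_carrier_mat)
  have "matP R Ai A *\<^sub>v y = (transpose_mat R * minv Ai * R) *\<^sub>v (A *\<^sub>v y)"
    unfolding matP_def using RT Ai R calA_carrier y by (intro assoc_mult_mat_vec) auto
  also have "\<dots> = (transpose_mat R * minv Ai) *\<^sub>v (R *\<^sub>v (A *\<^sub>v y))"
    using RT Ai R calA_carrier y by (intro assoc_mult_mat_vec) auto
  also have "\<dots> = transpose_mat R *\<^sub>v (minv Ai *\<^sub>v (R *\<^sub>v (A *\<^sub>v y)))"
    using RT Ai R calA_carrier y by (intro assoc_mult_mat_vec) auto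
  finally show "(1\<^sub>m S - matP R Ai A) *\<^sub>v y = y - transpose_mat R *\<^sub>v (minv Ai *\<^sub>v (R *\<^sub>v (A *\<^sub>v y)))"
    using P y by (simp add: minus_mult_distrib_mat_vec[of _ S S])
qed

lemma Q1_carrier: "Q1 \<in> carrier_mat S S"
  unfolding matQ1_def sz_eq
  by (rule one_minus_matP_mult_vec(2)[OF R_carrier(1) A1_minv(2) zero_carrier_vec])

lemma Q2_carrier: "Q2 \<in> carrier_mat S S"
  unfolding matQ2_def sz_eq
  by (rule one_minus_matP_mult_vec(2)[OF R_carrier(2) A2_minv(2) zero_carrier_vec])

text \<open>\<open>Q\<^sub>i y = y - R\<^sub>i\<^sup>T (corr\<^sub>i y)\<close>.\<close>
definition "corr1 y = minv A1 *\<^sub>v (matR1 M N *\<^sub>v (A *\<^sub>v y))"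
definition "corr2 y = minv A2 *\<^sub>v (matR2 M N *\<^sub>v (A *\<^sub>v y))"

lemma corr1_carrier: "y \<in> carrier_vec S \<Longrightarrow> corr1 y \<in> carrier_vec s"
  unfolding corr1_def using A1_minv(2) R_carrier calA_carrier by simp
lemma corr2_carrier: "y \<in> carrier_vec S \<Longrightarrow> corr2 y \<in> carrier_vec s"
  unfolding corr2_def using A2_minv(2) R_carrier calA_carrier by simp

lemma index_Q1_mult_vec:
  assumes "y \<in> carrier_vec S" "p < S"
  shows "(Q1 *\<^sub>v y) $ p = y $ p - (if p < s then corr1 y $ p else 0)"
proof -
  have "Q1 *\<^sub>v y = y - transpose_mat (matR1 M N) *\<^sub>v corr1 y"
    unfolding matQ1_def sz_eq corr1_def
    using one_minus_matP_mult_vec(1)[OF R_carrier(1) A1_minv(2) assms(1)] .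
  then show ?thesis using assms corr1_carrier by (simp add: R1_transpose_mult_vec)
qed

lemma index_Q2_mult_vec:
  assumes "y \<in> carrier_vec S" "p < S"
  shows "(Q2 *\<^sub>v y) $ p = y $ p - (if n * m \<le> p then corr2 y $ (p - n * m) else 0)"
proof -
  have "Q2 *\<^sub>v y = y - transpose_mat (matR2 M N) *\<^sub>v corr2 y"
    unfolding matQ2_def sz_eq corr2_def
    using one_minus_matP_mult_vec(1)[OF R_carrier(2) A2_minv(2) assms(1)] .
  then show ?thesis using assms corr2_carrier by (simp add: R2_transpose_mult_vec)
qed

lemma A1_corr1:
  assumes "y \<in> carrier_vec S"
  shows "A1 *\<^sub>v corr1 y = matR1 M N *\<^sub>v (A *\<^sub>v y)"
proof -
  have z: "matR1 M N *\<^sub>v (A *\<^sub>v y) \<in> carrier_vec s" using R_carrier calA_carrier assms by simp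
  have A1: "A1 \<in> carrier_mat s s" unfolding A1_eq_stencil by (rule stencil_mat_carrier)
  have "A1 *\<^sub>v corr1 y = (A1 * minv A1) *\<^sub>v (matR1 M N *\<^sub>v (A *\<^sub>v y))"
    unfolding corr1_def using A1 A1_minv(2) z by (rule assoc_mult_mat_vec[symmetric])
  then show ?thesis using A1_minv(1) z by simp
qed

lemma A2_corr2:
  assumes "y \<in> carrier_vec S"
  shows "A2 *\<^sub>v corr2 y = matR2 M N *\<^sub>v (A *\<^sub>v y)"
proof -
  have z: "matR2 M N *\<^sub>v (A *\<^sub>v y) \<in> carrier_vec s" using R_carrier calA_carrier assms by simp
  have A2: "A2 \<in> carrier_mat s s" unfolding A2_eq_stencil by (rule stencil_mat_carrier)
  have "A2 *\<^sub>v corr2 y = (A2 * minv A2) *\<^sub>v (matR2 M N *\<^sub>v (A *\<^sub>v y))"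
    unfolding corr2_def using A2 A2_minv(2) z by (rule assoc_mult_mat_vec[symmetric])
  then show ?thesis using A2_minv(1) z by simp
qed

lemma subdomain_line_le: "q < s \<Longrightarrow> q div n \<le> m"
proof -
  assume "q < s"
  then have "q < (m + 1) * n" by (simp add: mult.commute)
  then have "q div n < m + 1" using n_ge_2 by (subst div_less_iff_less_mult) auto
  then show ?thesis by simp
qed

definition "upd1 y = vec s (\<lambda>q. y $ q - corr1 y $ q)"
definition "upd2 y = vec s (\<lambda>q. y $ (q + n * m) - corr2 y $ q)"

text \<open>The subdomain matrices are the restrictions of \<open>A\<close>; they only lose the coupling of the
  subdomain's boundary line to the neighbouring line outside.\<close>
lemma A1_mult_restriction:
  assumes y: "y \<in> carrier_vec S" and q: "q < s"
  shows "(A1 *\<^sub>v vec s (\<lambda>i. y $ i)) $ q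
    = (A *\<^sub>v y) $ q - (if q div n = m then ee eps M * y $ (q + n) else 0)"
proof -
  define v r i where "v = vec s (\<lambda>i. y $ i)" "r = q div n" "i = q mod n"
  have v: "v \<in> carrier_vec s" by (simp add: v_r_i_def)
  have rm: "r \<le> m" using subdomain_line_le[OF q] by (simp add: v_r_i_def)
  have qS: "q < S" using q s_le_S by linarith
  have "(A1 *\<^sub>v v) $ q = a1 r * y $ q
     + (if 0 < i then - al * y $ (q - 1) else 0)
     + (if Suc i < n then - al * y $ Suc q else 0)
     + (if 0 < r then c1 r * y $ (q - n) else 0)
     + (if Suc r < m + 1 then eH eps M * y $ (q + n) else 0)"
    unfolding A1_eq_stencil index_stencil_mult[OF v q] v_r_i_def(2,3)[symmetric]
    using q line_index_bounds[OF q] by (simp add: v_r_i_def)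
  moreover have "(A *\<^sub>v y) $ q = a_full r * y $ q
     + (if 0 < i then - al * y $ (q - 1) else 0)
     + (if Suc i < n then - al * y $ Suc q else 0)
     + (if 0 < r then c_full r * y $ (q - n) else 0)
     + (if Suc r < 2 * m + 1 then u_full r * y $ (q + n) else 0)"
    unfolding calA_eq_stencil index_stencil_mult[OF y qS] v_r_i_def(2,3)[symmetric] ..
  moreover have "a1 r = a_full r" "c1 r = c_full r"
    using rm by (auto simp: a1_def a_full_def c1_def c_full_def)
  ultimately show ?thesis using rm m_ge_1 by (auto simp: u_full_def v_r_i_def)
qed

lemma A2_mult_restriction:
  assumes y: "y \<in> carrier_vec S" and q: "q < s"
  shows "(A2 *\<^sub>v vec s (\<lambda>i. y $ (i + n * m))) $ q
    = (A *\<^sub>v y) $ (q + n * m) - (if q div n = 0 then dd eps M * y $ (q + n * m - n) else 0)"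
proof -
  have n: "0 < n" using n_ge_2 by simp
  define v r i p where "v = vec s (\<lambda>i. y $ (i + n * m))" "r = q div n" "i = q mod n" "p = q + n * m"
  have v: "v \<in> carrier_vec s" by (simp add: v_r_i_p_def)
  have rm: "r \<le> m" using subdomain_line_le[OF q] by (simp add: v_r_i_p_def)
  have pS: "p < S" unfolding v_r_i_p_def S_split using q by linarith
  have pr: "p div n = r + m" "p mod n = i" using n by (simp_all add: v_r_i_p_def)
  have "v $ q = y $ p" using q by (simp add: v_r_i_p_def)
  moreover have "0 < i \<Longrightarrow> v $ (q - 1) = y $ (p - 1)"
    using q by (simp add: v_r_i_p_def) (metis Nat.add_diff_assoc2 One_nat_def less_eq_Suc_le
        mod_less_eq_dividend order.trans)
  moreover have "Suc i < n \<Longrightarrow> v $ Suc q = y $ Suc p"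
    using line_index_bounds(1)[OF q] by (simp add: v_r_i_p_def)
  moreover have "v $ (q - n) = y $ (p - n)" if "0 < r"
  proof -
    have "n \<le> q" using n that by (simp add: v_r_i_p_def div_greater_zero_iff)
    then have "q - n + n * m = q + n * m - n" by simp
    then show ?thesis using q \<open>n \<le> q\<close> by (simp add: v_r_i_p_def)
  qed
  moreover have "Suc r < m + 1 \<Longrightarrow> v $ (q + n) = y $ (p + n)"
    using line_index_bounds(2)[OF q] by (simp add: v_r_i_p_def algebra_simps)
  ultimately have "(A2 *\<^sub>v v) $ q = a2 r * y $ p
     + (if 0 < i then - al * y $ (p - 1) else 0)
     + (if Suc i < n then - al * y $ Suc p else 0)
     + (if 0 < r then dh eps M * y $ (p - n) else 0)
     + (if Suc r < m + 1 then u2 r * y $ (p + n) else 0)"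
    unfolding A2_eq_stencil index_stencil_mult[OF v q] v_r_i_p_def(2,3)[symmetric] by simp
  moreover have "(A *\<^sub>v y) $ p = a_full (r + m) * y $ p
     + (if 0 < i then - al * y $ (p - 1) else 0)
     + (if Suc i < n then - al * y $ Suc p else 0)
     + (if 0 < r + m then c_full (r + m) * y $ (p - n) else 0)
     + (if Suc (r + m) < 2 * m + 1 then u_full (r + m) * y $ (p + n) else 0)"
    unfolding calA_eq_stencil index_stencil_mult[OF y pS] pr ..
  moreover have "a2 r = a_full (r + m)" "Suc r < m + 1 \<Longrightarrow> u2 r = u_full (r + m)"
      "0 < r \<Longrightarrow> dh eps M = c_full (r + m)"
    using rm by (auto simp: a2_def a_full_def u2_def u_full_def c_full_def)
  ultimately show ?thesis using rm m_ge_1 by (auto simp: c_full_def v_r_i_p_def)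
qed

text \<open>\<open>upd\<^sub>i y\<close> is \<open>Q\<^sub>i y\<close> on the \<open>i\<close>-th subdomain; the exact subdomain solve leaves only the
  coupling to the old values outside.\<close>
lemma A1_upd1:
  assumes y: "y \<in> carrier_vec S" and q: "q < s"
  shows "(A1 *\<^sub>v upd1 y) $ q = (if q div n = m then - ee eps M * y $ (q + n) else 0)"
proof -
  have A1: "A1 \<in> carrier_mat s s" unfolding A1_eq_stencil by (rule stencil_mat_carrier)
  have "upd1 y = vec s (\<lambda>i. y $ i) - corr1 y"
    using corr1_carrier[OF y] by (intro eq_vecI) (auto simp: upd1_def)
  then have "A1 *\<^sub>v upd1 y = A1 *\<^sub>v vec s (\<lambda>i. y $ i) - matR1 M N *\<^sub>v (A *\<^sub>v y)"
    using A1 corr1_carrier[OF y] by (simp add: mult_minus_distrib_mat_vec A1_corr1[OF y])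
  then have "(A1 *\<^sub>v upd1 y) $ q = (A1 *\<^sub>v vec s (\<lambda>i. y $ i)) $ q - (A *\<^sub>v y) $ q"
    using q A1 calA_carrier y by (simp add: R1_mult_vec)
  then show ?thesis using A1_mult_restriction[OF y q] by simp
qed

lemma A2_upd2:
  assumes y: "y \<in> carrier_vec S" and q: "q < s"
  shows "(A2 *\<^sub>v upd2 y) $ q = (if q div n = 0 then - dd eps M * y $ (q + n * m - n) else 0)"
proof -
  have A2: "A2 \<in> carrier_mat s s" unfolding A2_eq_stencil by (rule stencil_mat_carrier)
  have "upd2 y = vec s (\<lambda>i. y $ (i + n * m)) - corr2 y"
    using corr2_carrier[OF y] by (intro eq_vecI) (auto simp: upd2_def)
  then have "A2 *\<^sub>v upd2 y = A2 *\<^sub>v vec s (\<lambda>i. y $ (i + n * m)) - matR2 M N *\<^sub>v (A *\<^sub>v y)"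
    using A2 corr2_carrier[OF y] by (simp add: mult_minus_distrib_mat_vec A2_corr2[OF y])
  then have "(A2 *\<^sub>v upd2 y) $ q = (A2 *\<^sub>v vec s (\<lambda>i. y $ (i + n * m))) $ q - (A *\<^sub>v y) $ (q + n * m)"
    using q A2 calA_carrier y by (simp add: R2_mult_vec)
  then show ?thesis using A2_mult_restriction[OF y q] by simp
qed

text \<open>Exponential decay away from the interface: comparison with the barrier \<open>Y rho^(m - r)\<close>.\<close>
lemma upd1_bound:
  assumes y: "y \<in> carrier_vec S" and Y: "\<And>j. s \<le> j \<Longrightarrow> j < s + n \<Longrightarrow> \<bar>y $ j\<bar> \<le> Y"
    and q: "q < s"
  shows "\<bar>upd1 y $ q\<bar> \<le> Y * rho ^ (m - q div n)"
proof (rule stencil_line_bound[OF dominant_A1, where g = "\<lambda>r. Y * rho ^ (m - r)"])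
  have Y0: "0 \<le> Y" using Y[of s] n_ge_2 by force
  then show "0 \<le> Y * rho ^ (m - r)" for r using rho_pos by simp
  fix p assume p: "p < n * (m + 1)"
  let ?r = "p div n"
  have rm: "?r \<le> m" using subdomain_line_le[OF p] .
  show "\<bar>(stencil_mat n (m + 1) al a1 c1 (\<lambda>_. eH eps M) *\<^sub>v upd1 y) $ p\<bar>
      \<le> (a1 ?r - 2 * al) * (Y * rho ^ (m - ?r))
        + (if 0 < ?r then c1 ?r * (Y * rho ^ (m - (?r - 1))) else 0)
        + (if Suc ?r < m + 1 then eH eps M * (Y * rho ^ (m - Suc ?r)) else 0)"
  proof (cases "?r < m")
    case True
    then show ?thesis
      using A1_upd1[OF y p] coarse_barrier_supersolution[OF Y0 True]
      unfolding A1_eq_stencil[symmetric] by (cases "0 < p div n") (simp_all add: a1_def c1_def aH_eq)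
  next
    case False
    then have r: "?r = m" using rm by simp
    have "p = m * n + p mod n" using r div_mult_mod_eq[of p n] by simp
    moreover have "p mod n < n" using n_ge_2 by simp
    ultimately have "s \<le> p + n" "p + n < s + n" by (simp_all add: algebra_simps)
    then have "\<bar>- ee eps M * y $ (p + n)\<bar> \<le> - ee eps M * Y"
      using Y coeffs_neg(5) by (simp add: abs_mult mult_left_mono)
    then show ?thesis
      using A1_upd1[OF y p] interface_barrier_supersolution[OF Y0] r m_ge_1
      unfolding A1_eq_stencil[symmetric] by (simp add: a1_def c1_def aa_eq)
  qed
qed (use q in \<open>simp_all add: upd1_def\<close>)

lemma upd2_bound:
  assumes y: "y \<in> carrier_vec S" and Y: "\<And>j. n * m - n \<le> j \<Longrightarrow> j < n * m \<Longrightarrow> \<bar>y $ j\<bar> \<le> Y"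
    and q: "q < s"
  shows "\<bar>upd2 y $ q\<bar> \<le> Y"
proof (rule stencil_line_bound[OF dominant_A2, where g = "\<lambda>_. Y"])
  have nm: "n \<le> n * m" using m_ge_1 by simp
  have Y0: "0 \<le> Y" using Y[of "n * m - 1"] n_ge_2 nm by force
  then show "0 \<le> Y" .
  fix p assume p: "p < n * (m + 1)"
  let ?r = "p div n"
  show "\<bar>(stencil_mat n (m + 1) al a2 (\<lambda>_. dh eps M) u2 *\<^sub>v upd2 y) $ p\<bar>
      \<le> (a2 ?r - 2 * al) * Y + (if 0 < ?r then dh eps M * Y else 0)
        + (if Suc ?r < m + 1 then u2 ?r * Y else 0)"
  proof (cases "?r = 0")
    case True
    then have "p < n" using n_ge_2 by (simp add: div_eq_0_iff)
    then have "n * m - n \<le> p + n * m - n" "p + n * m - n < n * m" using nm by arith+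
    then have "\<bar>- dd eps M * y $ (p + n * m - n)\<bar> \<le> - dd eps M * Y"
      using Y coeffs_neg(2) by (simp add: abs_mult mult_left_mono)
    moreover have "- dd eps M * Y \<le> (ym + beta) * Y + ee eps M * Y"
    proof -
      have ym: "ym = - dd eps M - ee eps M" using ym_balance by linarith
      have "(ym + beta) * Y + ee eps M * Y = - dd eps M * Y + beta * Y"
        unfolding ym by (simp add: algebra_simps)
      then show ?thesis using beta_nonneg Y0 by simp
    qed
    ultimately show ?thesis
      using A2_upd2[OF y p] True m_ge_1
      unfolding A2_eq_stencil[symmetric] by (simp add: a2_def u2_def aa_eq)
  next
    case False
    have "0 \<le> (yh + beta) * Y + dh eps M * Y + eh eps M * Y"
      using yh_balance beta_nonneg Y0 by (simp flip: distrib_right)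
    moreover have "eh eps M * Y \<le> 0" using coeffs_neg(6) Y0 by (simp add: mult_nonpos_nonneg)
    ultimately show ?thesis
      using A2_upd2[OF y p] False
      unfolding A2_eq_stencil[symmetric] by (simp add: a2_def u2_def ah_eq)
  qed
qed (use q in \<open>simp_all add: upd2_def\<close>)

lemma rho_nonneg: "0 \<le> rho" using rho_pos by simp

lemma rho_power_le: "1 \<le> k \<Longrightarrow> rho ^ k \<le> rho"
  using power_decreasing[of 1 k rho] rho_pos rho_less_1 by simp

lemma s_add_n_le_S: "s + n \<le> S"
proof -
  have "n * (m + 1) + n = n * (m + 2)" by (simp add: algebra_simps)
  also have "\<dots> \<le> n * (2 * m + 1)" using m_ge_1 by (intro mult_left_mono) auto
  finally show ?thesis .
qed

lemma Q1_mult_vec_carrier: "y \<in> carrier_vec S \<Longrightarrow> Q1 *\<^sub>v y \<in> carrier_vec S"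
  using Q1_carrier by simp

lemma Q2_mult_vec_carrier: "y \<in> carrier_vec S \<Longrightarrow> Q2 *\<^sub>v y \<in> carrier_vec S"
  using Q2_carrier by simp

lemma Q1_keeps_outside: "y \<in> carrier_vec S \<Longrightarrow> p < S \<Longrightarrow> s \<le> p \<Longrightarrow> (Q1 *\<^sub>v y) $ p = y $ p"
  by (simp add: index_Q1_mult_vec)

lemma Q2_keeps_outside: "y \<in> carrier_vec S \<Longrightarrow> p < n * m \<Longrightarrow> (Q2 *\<^sub>v y) $ p = y $ p"
  using S_split by (simp add: index_Q2_mult_vec)

lemma Q1_bound:
  assumes "y \<in> carrier_vec S" "\<And>j. s \<le> j \<Longrightarrow> j < s + n \<Longrightarrow> \<bar>y $ j\<bar> \<le> Y" "p < s"
  shows "\<bar>(Q1 *\<^sub>v y) $ p\<bar> \<le> Y * rho ^ (m - p div n)"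
  using upd1_bound[OF assms] assms(1,3) s_le_S by (simp add: index_Q1_mult_vec upd1_def)

lemma Q2_bound:
  assumes y: "y \<in> carrier_vec S" and Y: "\<And>j. n * m - n \<le> j \<Longrightarrow> j < n * m \<Longrightarrow> \<bar>y $ j\<bar> \<le> Y"
    and p: "n * m \<le> p" "p < S"
  shows "\<bar>(Q2 *\<^sub>v y) $ p\<bar> \<le> Y"
proof -
  have lt: "p - n * m < s" using p S_split by simp
  have "\<bar>upd2 y $ (p - n * m)\<bar> \<le> Y" by (rule upd2_bound[OF y Y lt])
  then show ?thesis using lt y p by (simp add: index_Q2_mult_vec upd2_def)
qed

lemma line_below_interface:
  assumes "n * m - n \<le> j" "j < n * m"
  shows "j < s" "m - j div n = 1"
proof -
  show "j < s" using assms(2) by simp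
  have "j div n < m" using assms(2) n_ge_2 by (simp add: div_less_iff_less_mult mult.commute)
  moreover have "(m - 1) * n \<le> j" using assms(1) by (simp add: algebra_simps diff_mult_distrib)
  then have "m - 1 \<le> j div n" using n_ge_2 by (metis div_le_mono div_mult_self_is_m not_gr0 not_numeral_le_zero)
  ultimately show "m - j div n = 1" by linarith
qed

lemma entry_above_interface_le_norm:
  assumes "y \<in> carrier_vec S" "s \<le> j" "j < s + n"
  shows "\<bar>y $ j\<bar> \<le> vec_inf_norm y"
proof -
  have "j < S" using assms(3) s_add_n_le_S by linarith
  then show ?thesis using assms(1) vec_inf_norm_ge[of j y] by simp
qed

lemma Q1_Q2_bound:
  assumes x: "x \<in> carrier_vec S" and Y: "\<And>j. n * m - n \<le> j \<Longrightarrow> j < n * m \<Longrightarrow> \<bar>x $ j\<bar> \<le> Y"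
    and Y0: "0 \<le> Y"
  shows "vec_inf_norm (Q1 *\<^sub>v (Q2 *\<^sub>v x)) \<le> Y"
proof (rule vec_inf_norm_leI[OF Y0])
  let ?z = "Q2 *\<^sub>v x"
  have z: "?z \<in> carrier_vec S" using Q2_mult_vec_carrier[OF x] .
  have zY: "\<bar>?z $ j\<bar> \<le> Y" if "s \<le> j" "j < s + n" for j
  proof (rule Q2_bound[OF x Y])
    show "n * m \<le> j" using that by simp
    show "j < S" using that(2) s_add_n_le_S by linarith
  qed
  fix p assume "p < dim_vec (Q1 *\<^sub>v ?z)"
  then have p: "p < S" using Q1_carrier by simp
  show "\<bar>(Q1 *\<^sub>v ?z) $ p\<bar> \<le> Y"
  proof (cases "p < s")
    case True
    have "\<bar>(Q1 *\<^sub>v ?z) $ p\<bar> \<le> Y * rho ^ (m - p div n)" by (rule Q1_bound[OF z zY True])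
    also have "\<dots> \<le> Y" using Y0 rho_pos rho_less_1 by (simp add: mult_left_le power_le_one)
    finally show ?thesis .
  next
    case False
    then show ?thesis using Q1_keeps_outside[OF z p] Q2_bound[OF x Y _ p] by simp
  qed
qed

lemma Q1_Q2_nonexpansive:
  assumes y: "y \<in> carrier_vec S"
  shows "vec_inf_norm (Q1 *\<^sub>v (Q2 *\<^sub>v y)) \<le> vec_inf_norm y"
proof (rule Q1_Q2_bound[OF y _ vec_inf_norm_nonneg])
  fix j assume "n * m - n \<le> j" "j < n * m"
  then have "j < S" using S_split by linarith
  then show "\<bar>y $ j\<bar> \<le> vec_inf_norm y" using vec_inf_norm_ge[of j y] y by simp
qed

text \<open>On line \<open>m - 1\<close> an output of \<open>Q1\<close> is at most \<open>rho\<close> times its data on line \<open>m + 1\<close>,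
  which \<open>Q1\<close> leaves unchanged.\<close>
lemma Q1_output_below_interface:
  assumes u: "u \<in> carrier_vec S" and j: "n * m - n \<le> j" "j < n * m"
  shows "\<bar>(Q1 *\<^sub>v u) $ j\<bar> \<le> rho * vec_inf_norm (Q1 *\<^sub>v u)"
proof -
  have "\<bar>u $ i\<bar> \<le> vec_inf_norm (Q1 *\<^sub>v u)" if "s \<le> i" "i < s + n" for i
  proof -
    have "i < S" using that(2) s_add_n_le_S by linarith
    then have "(Q1 *\<^sub>v u) $ i = u $ i" by (rule Q1_keeps_outside[OF u _ that(1)])
    then show ?thesis using entry_above_interface_le_norm[OF Q1_mult_vec_carrier[OF u] that] by simp
  qed
  from Q1_bound[OF u this line_below_interface(1)[OF j]]
  show ?thesis using line_below_interface(2)[OF j] by (simp add: mult.commute)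
qed

lemma Q1_Q2_contracts_on_range_Q1:
  assumes u: "u \<in> carrier_vec S"
  shows "vec_inf_norm (Q1 *\<^sub>v (Q2 *\<^sub>v (Q1 *\<^sub>v u))) \<le> rho * vec_inf_norm (Q1 *\<^sub>v u)"
  by (rule Q1_Q2_bound[OF Q1_mult_vec_carrier[OF u] Q1_output_below_interface[OF u]
        mult_nonneg_nonneg[OF rho_nonneg vec_inf_norm_nonneg]])

lemma Q2_Q1_contracts:
  assumes y: "y \<in> carrier_vec S"
  shows "vec_inf_norm (Q2 *\<^sub>v (Q1 *\<^sub>v y)) \<le> rho * vec_inf_norm y"
proof (rule vec_inf_norm_leI)
  show "0 \<le> rho * vec_inf_norm y" by (rule mult_nonneg_nonneg[OF rho_nonneg vec_inf_norm_nonneg])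
  let ?z = "Q1 *\<^sub>v y"
  have z: "?z \<in> carrier_vec S" by (rule Q1_mult_vec_carrier[OF y])
  have zs: "\<bar>?z $ p\<bar> \<le> rho * vec_inf_norm y" if "p < s" "p div n < m" for p
  proof -
    have "\<bar>?z $ p\<bar> \<le> vec_inf_norm y * rho ^ (m - p div n)"
      by (rule Q1_bound[OF y entry_above_interface_le_norm[OF y] that(1)])
    also have "\<dots> \<le> vec_inf_norm y * rho"
      using that(2) by (intro mult_left_mono rho_power_le vec_inf_norm_nonneg) simp
    finally show ?thesis by (simp add: mult.commute)
  qed
  fix p assume "p < dim_vec (Q2 *\<^sub>v ?z)"
  then have p: "p < S" using Q2_carrier by simp
  show "\<bar>(Q2 *\<^sub>v ?z) $ p\<bar> \<le> rho * vec_inf_norm y"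
  proof (cases "p < n * m")
    case True
    then have "p div n < m" using n_ge_2 by (simp add: div_less_iff_less_mult mult.commute)
    then show ?thesis using Q2_keeps_outside[OF z True] zs[of p] True by simp
  next
    case False
    show ?thesis
    proof (rule Q2_bound[OF z _ _ p])
      show "n * m \<le> p" using False by simp
      fix j assume j: "n * m - n \<le> j" "j < n * m"
      have "j div n < m" using line_below_interface(2)[OF j] by linarith
      then show "\<bar>?z $ j\<bar> \<le> rho * vec_inf_norm y" by (rule zs[OF line_below_interface(1)[OF j]])
    qed
  qed
qed

lemma T12_carrier: "T12 eps beta M N \<in> carrier_mat S S"
  unfolding T12_def using Q1_carrier Q2_carrier by simp
lemma T21_carrier: "T21 eps beta M N \<in> carrier_mat S S"
  unfolding T21_def using Q1_carrier Q2_carrier by simp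

lemma T12_mult_vec: "y \<in> carrier_vec S \<Longrightarrow> T12 eps beta M N *\<^sub>v y = Q2 *\<^sub>v (Q1 *\<^sub>v y)"
  unfolding T12_def using Q1_carrier Q2_carrier by simp
lemma T21_mult_vec: "y \<in> carrier_vec S \<Longrightarrow> T21 eps beta M N *\<^sub>v y = Q1 *\<^sub>v (Q2 *\<^sub>v y)"
  unfolding T21_def using Q1_carrier Q2_carrier by simp

lemma T12_norm: "mat_inf_norm (T12 eps beta M N) \<le> rho"
  by (rule mat_inf_norm_le_if_vec_bound)
    (use rho_pos T12_carrier Q2_Q1_contracts in \<open>auto simp: T12_mult_vec less_imp_le\<close>)

lemma T21_norm: "mat_inf_norm (T21 eps beta M N) \<le> 1"
  by (rule mat_inf_norm_le_if_vec_bound)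
    (use T21_carrier Q1_Q2_nonexpansive in \<open>auto simp: T21_mult_vec\<close>)

text \<open>Every error after the first step lies in the range of the last factor, where both
  iteration matrices contract by \<open>rho\<close>.\<close>
lemma schwarz_error_bound:
  assumes T: "T \<in> {T12 eps beta M N, T21 eps beta M N}"
    and b: "b \<in> carrier_vec S" and x0: "x0 \<in> carrier_vec S"
    and e: "e = (\<lambda>k. minv A *\<^sub>v b - schwarz_iter T ((1\<^sub>m S - T) *\<^sub>v (minv A *\<^sub>v b)) x0 k)"
    and e0: "e 0 \<noteq> 0\<^sub>v S"
  shows "vec_inf_norm (e (Suc k)) / vec_inf_norm (e 0) \<le> rho ^ k * mat_inf_norm T"
proof -
  have TS: "T \<in> carrier_mat S S" using T T12_carrier T21_carrier by auto
  have x: "minv A *\<^sub>v b \<in> carrier_vec S" using minv_calA_carrier b by simp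
  have v: "(1\<^sub>m S - T) *\<^sub>v (minv A *\<^sub>v b) \<in> carrier_vec S"
    by (rule mult_mat_vec_carrier[OF minus_carrier_mat[OF TS] x])
  have ec: "e k \<in> carrier_vec S" for k
    unfolding e using schwarz_iter_carrier[OF TS v x0] x by simp
  have step: "e (Suc k) = T *\<^sub>v e k" for k unfolding e by (rule schwarz_iter_error[OF TS x x0])
  have "vec_inf_norm (e 1) \<le> mat_inf_norm T * vec_inf_norm (e 0)"
    using step[of 0] vec_inf_norm_mult_mat_vec_le[of "e 0" T] ec TS by simp
  moreover have "vec_inf_norm (e (Suc (Suc k))) \<le> rho * vec_inf_norm (e (Suc k))" for k
  proof (cases "T = T12 eps beta M N")
    case True
    show ?thesis
      unfolding step[of "Suc k"] True T12_mult_vec[OF ec] by (rule Q2_Q1_contracts[OF ec])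
  next
    case False
    then have T21: "T = T21 eps beta M N" using T by simp
    have "e (Suc k) = Q1 *\<^sub>v (Q2 *\<^sub>v e k)"
      unfolding step T21 T21_mult_vec[OF ec] ..
    moreover have "e (Suc (Suc k)) = Q1 *\<^sub>v (Q2 *\<^sub>v e (Suc k))"
      unfolding step[of "Suc k"] T21 T21_mult_vec[OF ec] ..
    ultimately show ?thesis
      using Q1_Q2_contracts_on_range_Q1[OF Q2_mult_vec_carrier[OF ec[of k]]] by simp
  qed
  ultimately have "vec_inf_norm (e (Suc k)) \<le> rho ^ k * (mat_inf_norm T * vec_inf_norm (e 0))"
    using geometric_decay[of "\<lambda>k. vec_inf_norm (e k)"] rho_pos by simp
  moreover have "0 < vec_inf_norm (e 0)" by (rule vec_inf_norm_pos[OF ec e0])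
  ultimately show ?thesis by (simp add: divide_le_eq mult.assoc)
qed

end

theorem corollary5p2:
  fixes eps beta :: real and M N :: nat
  assumes "eps > 0" and "beta \<ge> 0" and "even M" and "M \<ge> 4" and "N \<ge> 3"
  shows "mat_inf_norm (T12 eps beta M N) \<le> eps / (eps + Hy eps M)
       \<and> mat_inf_norm (T21 eps beta M N) \<le> 1
       \<and> (\<forall>T \<in> {T12 eps beta M N, T21 eps beta M N}. \<forall>b x0.
            b \<in> carrier_vec (sz M N) \<longrightarrow> x0 \<in> carrier_vec (sz M N) \<longrightarrow>
            (let x = minv (calA eps beta M N) *\<^sub>v b;
                 v = (1\<^sub>m (sz M N) - T) *\<^sub>v x;
                 e = (\<lambda>k. x - schwarz_iter T v x0 k)
             in e 0 \<noteq> 0\<^sub>v (sz M N) \<longrightarrow>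
                (\<forall>k. vec_inf_norm (e (Suc k)) / vec_inf_norm (e 0)
                       \<le> (eps / (eps + Hy eps M)) ^ k * mat_inf_norm T)))"
proof -
  interpret shishkin_mesh eps beta M N using assms by unfold_locales auto
  have rho: "eps / (eps + Hy eps M) = rho" by (simp add: rho_def H_def)
  show ?thesis
    unfolding sz_eq rho Let_def using T12_norm T21_norm schwarz_error_bound by blast
qed

end
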